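(* Let $T:=12$, $U:=\mathcal{L}^2([0,T];\mathbb{R})\times\mathcal{L}^2([0,T];\mathbb{R})$, $K_2:=\{(u_1,u_2)\in U:|u_1(t)|\le0.8,\ |u_2(t)|\le0.4\ \forall t\in[0,T]\}$, and $\varphi(u):=\int_0^T(u_1^2(t)+u_2^2(t))\,dt$. For $u\in U$, $t\in[0,T]$ let $G_3(u)(t):=\pi/2+0.2\int_0^t\int_0^r(u_1(s)-u_2(s))\,ds\,dr$ and define $h=(h_1,\ldots,h_6):U\to\mathbb{R}^6$ by $h_1(u):=-10+\int_0^T\int_0^r(u_1+u_2)(s)\cos G_3(u)(s)\,ds\,dr$, $h_2(u):=-10+\int_0^T\int_0^r(u_1+u_2)(s)\sin G_3(u)(s)\,ds\,dr$, $h_3(u):=G_3(u)(T)$, $h_4(u):=\int_0^T(u_1+u_2)(s)\cos G_3(u)(s)\,ds$, $h_5(u):=\int_0^T(u_1+u_2)(s)\sin G_3(u)(s)\,ds$, $h_6(u):=0.2\int_0^T(u_1-u_2)(s)\,ds$. Consider the free-flying robot problem $(P3)$: minimize $\varphi(u)$ subject to $u\in K_2$, $h(u)=0$, and the dualizing parameterization $f:U\times\mathbb{R}^6\to\mathbb{R}\cup\{+\infty\}$, $f(u,z):=\varphi(u)+\delta_z(h(u))+\delta_{K_2}(u)$. Then: (H0) $\varphi$ is proper and weakly lower semicontinuous; (H1) every level set of $\varphi$ is weakly compact; (H2) $f$ is proper, weakly lower semicontinuous and weakly level-compact.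
   Context: $h(u)=0$ is equivalent to the dynamics $\dot x_1=x_4,\dot x_2=x_5,\dot x_3=x_6,\dot x_4=(u_1+u_2)\cos x_3,\dot x_5=(u_1+u_2)\sin x_3,\dot x_6=0.2(u_1-u_2)$ with $x(0)=(-10,-10,\pi/2,0,0,0)$ and $x(12)=0$. $\delta_C$ is the indicator function of $C$ ($0$ on $C$, $+\infty$ elsewhere), $\delta_z:=\delta_{\{z\}}$. Proper: never $-\infty$ and not identically $+\infty$. Weakly compact: weak closure compact in the weak topology. $f:U\times H\to[-\infty,\infty]$ is weakly level-compact if for each $\bar z\in H$, $\alpha\in\mathbb{R}$ there exist a weakly open neighbourhood $V$ of $\bar z$ and a weakly compact $B\subset U$ with $\{u\in U:f(u,z)\le\alpha\}\subset B$ for all $z\in V$. *)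

theory Defs
  imports "HOL-Analysis.Analysis"
begin

text \<open>Elements of U = L2([0,T]) x L2([0,T]) are represented
  by pairs of real functions that are Lebesgue measurable and square integrable on [0,T];
  only their values on [0,T] (up to null sets) matter for everything below.\<close>

definition T_end :: real where "T_end = 12"

definition L2T :: "(real \<Rightarrow> real) set" where
  "L2T = {v. v \<in> borel_measurable (lebesgue_on {0..T_end}) \<and>
              integrable (lebesgue_on {0..T_end}) (\<lambda>t. (v t)\<^sup>2)}"

definition U :: "((real \<Rightarrow> real) \<times> (real \<Rightarrow> real)) set" where
  "U = L2T \<times> L2T"

definition innerU :: "((real \<Rightarrow> real) \<times> (real \<Rightarrow> real)) \<Rightarrow> ((real \<Rightarrow> real) \<times> (real \<Rightarrow> real)) \<Rightarrow> real" where
  "innerU u g = integral\<^sup>L (lebesgue_on {0..T_end}) (\<lambda>t. fst u t * fst g t + snd u t * snd g t)"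

text \<open>Weak topology on the Hilbert space U: the coarsest topology on U making all
  functionals u \<mapsto> <u,g> (g \<in> U) continuous (Riesz representation of U*).\<close>
definition weakU :: "((real \<Rightarrow> real) \<times> (real \<Rightarrow> real)) topology" where
  "weakU = pullback_topology U (\<lambda>u. restrict (\<lambda>g. innerU u g) U)
             (product_topology (\<lambda>g. euclideanreal) U)"

text \<open>K2 (constraints understood almost everywhere, as for L2 classes).\<close>
definition K2 :: "((real \<Rightarrow> real) \<times> (real \<Rightarrow> real)) set" where
  "K2 = {u \<in> U. (AE t in lebesgue_on {0..T_end}. \<bar>fst u t\<bar> \<le> 0.8 \<and> \<bar>snd u t\<bar> \<le> 0.4)}"

definition phi :: "((real \<Rightarrow> real) \<times> (real \<Rightarrow> real)) \<Rightarrow> ereal" where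
  "phi u = ereal (integral\<^sup>L (lebesgue_on {0..T_end}) (\<lambda>t. (fst u t)\<^sup>2 + (snd u t)\<^sup>2))"

definition G3 :: "((real \<Rightarrow> real) \<times> (real \<Rightarrow> real)) \<Rightarrow> real \<Rightarrow> real" where
  "G3 u t = pi / 2 + 0.2 * integral\<^sup>L (lebesgue_on {0..t})
      (\<lambda>r. integral\<^sup>L (lebesgue_on {0..r}) (\<lambda>s. fst u s - snd u s))"

definition h :: "((real \<Rightarrow> real) \<times> (real \<Rightarrow> real)) \<Rightarrow> real ^ 6" where
  "h u = vector
    [ -10 + integral\<^sup>L (lebesgue_on {0..T_end}) (\<lambda>r. integral\<^sup>L (lebesgue_on {0..r})
              (\<lambda>s. (fst u s + snd u s) * cos (G3 u s))),
      -10 + integral\<^sup>L (lebesgue_on {0..T_end}) (\<lambda>r. integral\<^sup>L (lebesgue_on {0..r})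
              (\<lambda>s. (fst u s + snd u s) * sin (G3 u s))),
      G3 u T_end,
      integral\<^sup>L (lebesgue_on {0..T_end}) (\<lambda>s. (fst u s + snd u s) * cos (G3 u s)),
      integral\<^sup>L (lebesgue_on {0..T_end}) (\<lambda>s. (fst u s + snd u s) * sin (G3 u s)),
      0.2 * integral\<^sup>L (lebesgue_on {0..T_end}) (\<lambda>s. fst u s - snd u s) ]"

definition indicatorF :: "'a set \<Rightarrow> 'a \<Rightarrow> ereal" where
  "indicatorF C x = (if x \<in> C then 0 else \<infinity>)"

definition f_param :: "((real \<Rightarrow> real) \<times> (real \<Rightarrow> real)) \<Rightarrow> real ^ 6 \<Rightarrow> ereal" where
  "f_param u z = phi u + indicatorF {z} (h u) + indicatorF K2 u"

definition proper_on :: "'a set \<Rightarrow> ('a \<Rightarrow> ereal) \<Rightarrow> bool" where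
  "proper_on A F \<longleftrightarrow> (\<forall>x\<in>A. F x \<noteq> -\<infinity>) \<and> (\<exists>x\<in>A. F x \<noteq> \<infinity>)"

definition lsc_wrt :: "'a topology \<Rightarrow> ('a \<Rightarrow> ereal) \<Rightarrow> bool" where
  "lsc_wrt X F \<longleftrightarrow> (\<forall>\<alpha>::real. closedin X {x \<in> topspace X. F x \<le> ereal \<alpha>})"

definition rel_compact_in :: "'a topology \<Rightarrow> 'a set \<Rightarrow> bool" where
  "rel_compact_in X S \<longleftrightarrow> compactin X (X closure_of S)"

definition weakly_level_compact ::
  "((real \<Rightarrow> real) \<times> (real \<Rightarrow> real) \<Rightarrow> real ^ 6 \<Rightarrow> ereal) \<Rightarrow> bool" where
  "weakly_level_compact F \<longleftrightarrow>
     (\<forall>zbar::real^6. \<forall>\<alpha>::real. \<exists>V B. open V \<and> zbar \<in> V \<and> B \<subseteq> U \<and> rel_compact_in weakU B \<and>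
        (\<forall>z\<in>V. {u \<in> U. F u z \<le> ereal \<alpha>} \<subseteq> B))"

end

theory Submission
  imports Defs
begin

lemma nonneg_quadratic_discriminant:
  fixes a b c :: real
  assumes nonneg: "\<And>t. 0 \<le> a + 2 * b * t + c * t\<^sup>2" and "0 \<le> c"
  shows "b\<^sup>2 \<le> a * c"
proof (cases "c = 0")
  case True
  have "b = 0"
  proof (rule ccontr)
    assume "b \<noteq> 0"
    have "0 \<le> a + 2 * b * (- (\<bar>a\<bar> + 1) / (2 * b))"
      using nonneg[of "- (\<bar>a\<bar> + 1) / (2 * b)"] True by simp
    also have "\<dots> = a - (\<bar>a\<bar> + 1)" using \<open>b \<noteq> 0\<close> by (simp add: field_simps)
    finally show False by simp
  qed
  then show ?thesis using True by simp
next
  case False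
  then have c: "c > 0" using \<open>0 \<le> c\<close> by simp
  have "0 \<le> a + 2 * b * (- b / c) + c * (- b / c)\<^sup>2" by (rule nonneg)
  also have "\<dots> = a - b\<^sup>2 / c" using c by (simp add: field_simps power2_eq_square)
  finally show ?thesis using c by (simp add: field_simps mult.commute)
qed

locale semi_inner_product_space =
  fixes H :: "'a set"
    and add :: "'a \<Rightarrow> 'a \<Rightarrow> 'a"
    and scale :: "real \<Rightarrow> 'a \<Rightarrow> 'a"
    and ip :: "'a \<Rightarrow> 'a \<Rightarrow> real"
  assumes add_closed: "u \<in> H \<Longrightarrow> v \<in> H \<Longrightarrow> add u v \<in> H"
    and scale_closed: "u \<in> H \<Longrightarrow> scale c u \<in> H"
    and ip_sym: "u \<in> H \<Longrightarrow> v \<in> H \<Longrightarrow> ip u v = ip v u"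
    and ip_add_left: "u \<in> H \<Longrightarrow> v \<in> H \<Longrightarrow> w \<in> H \<Longrightarrow> ip (add u v) w = ip u w + ip v w"
    and ip_scale_left: "u \<in> H \<Longrightarrow> w \<in> H \<Longrightarrow> ip (scale c u) w = c * ip u w"
    and ip_self_nonneg: "u \<in> H \<Longrightarrow> 0 \<le> ip u u"
begin

definition hnorm :: "'a \<Rightarrow> real" where
  "hnorm u = sqrt (ip u u)"

definition hdist :: "'a \<Rightarrow> 'a \<Rightarrow> real" where
  "hdist u v = hnorm (add u (scale (-1) v))"

lemma diff_closed: "u \<in> H \<Longrightarrow> v \<in> H \<Longrightarrow> add u (scale (-1) v) \<in> H"
  by (intro add_closed scale_closed)

lemma ip_add_right: "u \<in> H \<Longrightarrow> v \<in> H \<Longrightarrow> w \<in> H \<Longrightarrow> ip w (add u v) = ip w u + ip w v"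
  using ip_sym[of "add u v" w] ip_sym[of u w] ip_sym[of v w] by (simp add: ip_add_left add_closed)

lemma ip_scale_right: "u \<in> H \<Longrightarrow> w \<in> H \<Longrightarrow> ip w (scale c u) = c * ip w u"
  using ip_sym[of "scale c u" w] ip_sym[of u w] by (simp add: ip_scale_left scale_closed)

lemma ip_self_add:
  assumes "u \<in> H" "v \<in> H"
  shows "ip (add u v) (add u v) = ip u u + 2 * ip u v + ip v v"
  using assms by (simp add: ip_add_left ip_add_right add_closed ip_sym[of v u])

lemma ip_self_add_scale:
  assumes "u \<in> H" "g \<in> H"
  shows "ip (add u (scale t g)) (add u (scale t g)) = ip u u + 2 * ip u g * t + ip g g * t\<^sup>2"
  using assms
  by (simp add: ip_self_add scale_closed ip_scale_left ip_scale_right power2_eq_square algebra_simps)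

lemma hnorm_nonneg: "u \<in> H \<Longrightarrow> 0 \<le> hnorm u"
  by (simp add: hnorm_def ip_self_nonneg)

lemma hdist_nonneg: "u \<in> H \<Longrightarrow> v \<in> H \<Longrightarrow> 0 \<le> hdist u v"
  by (simp add: hdist_def hnorm_nonneg diff_closed)

lemma hnorm_squared:
  assumes "u \<in> H"
  shows "(hnorm u)\<^sup>2 = ip u u"
  using ip_self_nonneg[OF assms] by (simp add: hnorm_def)

lemma hdist_squared:
  assumes "u \<in> H" "v \<in> H"
  shows "(hdist u v)\<^sup>2 = ip u u - 2 * ip u v + ip v v"
  using ip_self_add_scale[OF assms, of "-1"] assms by (simp add: hdist_def hnorm_squared diff_closed)

lemma Cauchy_Schwarz:
  assumes "u \<in> H" "g \<in> H"
  shows "\<bar>ip u g\<bar> \<le> hnorm u * hnorm g"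
proof -
  have "0 \<le> ip u u + 2 * ip u g * t + ip g g * t\<^sup>2" for t
    using ip_self_nonneg[OF add_closed[OF assms(1) scale_closed[OF assms(2)]]]
    by (simp add: ip_self_add_scale[OF assms])
  then have "(ip u g)\<^sup>2 \<le> ip u u * ip g g"
    using ip_self_nonneg[OF assms(2)] by (rule nonneg_quadratic_discriminant)
  then have "sqrt ((ip u g)\<^sup>2) \<le> sqrt (ip u u * ip g g)" by (rule real_sqrt_le_mono)
  then show ?thesis by (simp add: hnorm_def real_sqrt_mult)
qed

lemma hnorm_add_le:
  assumes "u \<in> H" "v \<in> H"
  shows "hnorm (add u v) \<le> hnorm u + hnorm v"
proof -
  have "(hnorm (add u v))\<^sup>2 = ip u u + 2 * ip u v + ip v v"
    using assms by (simp add: hnorm_squared add_closed ip_self_add)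
  also have "\<dots> \<le> (hnorm u)\<^sup>2 + 2 * (hnorm u * hnorm v) + (hnorm v)\<^sup>2"
    using Cauchy_Schwarz[OF assms] assms by (simp add: hnorm_squared)
  also have "\<dots> = (hnorm u + hnorm v)\<^sup>2" by (simp add: power2_sum)
  finally show ?thesis
    by (rule power2_le_imp_le) (simp_all add: assms hnorm_nonneg add_nonneg_nonneg)
qed

lemma hnorm_le_add_hdist:
  assumes "u \<in> H" "v \<in> H"
  shows "hnorm u \<le> hnorm v + hdist u v"
proof -
  let ?w = "add v (add u (scale (-1) v))"
  have w: "?w \<in> H" using assms by (simp add: add_closed diff_closed)
  have ip_w: "ip ?w g = ip u g" if "g \<in> H" for g
    using assms that by (simp add: ip_add_left ip_scale_left scale_closed diff_closed)
  have "hnorm ?w = hnorm u"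
    using ip_w[OF w] ip_w[OF assms(1)] ip_sym[OF w assms(1)] by (simp add: hnorm_def)
  then show ?thesis
    using hnorm_add_le[OF assms(2) diff_closed[OF assms]] by (simp add: hdist_def)
qed

lemma parallelogram:
  assumes "u \<in> H" "v \<in> H"
  shows "(hdist u v)\<^sup>2 + ip (add u v) (add u v) = 2 * ip u u + 2 * ip v v"
  using assms by (simp add: hdist_squared ip_self_add)

end

lemma closedin_Collect_Ball:
  assumes "\<And>i. i \<in> I \<Longrightarrow> closedin X {x \<in> topspace X. P i x}"
  shows "closedin X {x \<in> topspace X. \<forall>i\<in>I. P i x}"
proof (cases "I = {}")
  case False
  have eq: "{x \<in> topspace X. \<forall>i\<in>I. P i x} = topspace X \<inter> (\<Inter>i\<in>I. {x \<in> topspace X. P i x})"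
    by blast
  have "closedin X (\<Inter>i\<in>I. {x \<in> topspace X. P i x})"
    using False assms by (rule closedin_INT)
  then show ?thesis unfolding eq by (rule closedin_Int[OF closedin_topspace])
qed simp

lemma compactin_pullback_topology:
  assumes "S \<subseteq> A" and compact: "compactin X (f ` S)"
  shows "compactin (pullback_topology A f X) S"
  unfolding compactin_def
proof (intro conjI allI impI)
  show "S \<subseteq> topspace (pullback_topology A f X)"
    using compactin_subset_topspace[OF compact] assms(1) by (auto simp: topspace_pullback_topology)
  fix \<U> assume \<U>: "(\<forall>W\<in>\<U>. openin (pullback_topology A f X) W) \<and> S \<subseteq> \<Union>\<U>"
  then have "\<forall>W\<in>\<U>. \<exists>V. openin X V \<and> W = f -` V \<inter> A"
    by (simp add: openin_pullback_topology)
  then obtain V where V_open: "\<And>W. W \<in> \<U> \<Longrightarrow> openin X (V W)"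
    and V_pre: "\<And>W. W \<in> \<U> \<Longrightarrow> W = f -` V W \<inter> A"
    by metis
  have "f ` S \<subseteq> \<Union> (V ` \<U>)"
  proof
    fix y assume "y \<in> f ` S"
    then obtain x W where "y = f x" "x \<in> W" "W \<in> \<U>" using \<U> by blast
    then show "y \<in> \<Union> (V ` \<U>)" using V_pre[of W] by (metis IntD1 UN_iff vimageE)
  qed
  then obtain \<F> where "finite \<F>" "\<F> \<subseteq> V ` \<U>" "f ` S \<subseteq> \<Union> \<F>"
    using compactinD[OF compact] V_open by (metis imageE)
  then obtain \<G> where \<G>: "finite \<G>" "\<G> \<subseteq> \<U>" "f ` S \<subseteq> \<Union> (V ` \<G>)"
    by (metis finite_subset_image)
  have "S \<subseteq> \<Union> \<G>"
  proof
    fix x assume "x \<in> S"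
    then obtain W where W: "W \<in> \<G>" "f x \<in> V W" using \<G>(3) by blast
    then have "x \<in> f -` V W \<inter> A" using \<open>x \<in> S\<close> assms(1) by blast
    then show "x \<in> \<Union> \<G>" using V_pre[of W] W(1) \<G>(2) by auto
  qed
  then show "\<exists>\<F>. finite \<F> \<and> \<F> \<subseteq> \<U> \<and> S \<subseteq> \<Union> \<F>" using \<G> by blast
qed

context semi_inner_product_space
begin

definition weak_topology :: "'a topology" where
  "weak_topology = pullback_topology H (\<lambda>u. restrict (\<lambda>g. ip u g) H)
     (product_topology (\<lambda>g. euclideanreal) H)"

lemma topspace_weak_topology [simp]: "topspace weak_topology = H"
  by (auto simp: weak_topology_def topspace_pullback_topology)

lemma continuous_map_weak_ip:
  assumes "g \<in> H"
  shows "continuous_map weak_topology euclideanreal (\<lambda>u. ip u g)"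
proof -
  have "continuous_map weak_topology euclideanreal ((\<lambda>L. L g) \<circ> (\<lambda>u. restrict (\<lambda>g. ip u g) H))"
    unfolding weak_topology_def
    by (intro continuous_map_pullback continuous_map_product_projection assms)
  then show ?thesis using assms by (simp add: o_def)
qed

lemma closedin_weak_halfspaces:
  assumes "\<And>g c. (g, c) \<in> F \<Longrightarrow> g \<in> H"
  shows "closedin weak_topology {u \<in> H. \<forall>(g, c)\<in>F. ip u g \<le> c}"
proof -
  have "closedin weak_topology {u \<in> topspace weak_topology. ip u (fst p) \<in> {..snd p}}" if "p \<in> F" for p
    using assms[of "fst p" "snd p"] that
    by (intro closedin_continuous_map_preimage[OF continuous_map_weak_ip]) auto
  then have "closedin weak_topology {u \<in> topspace weak_topology. \<forall>p\<in>F. ip u (fst p) \<in> {..snd p}}"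
    by (rule closedin_Collect_Ball)
  then show ?thesis by (simp add: case_prod_beta)
qed

lemma hnorm_le_of_ip_self_le:
  assumes "u \<in> H" "0 \<le> r" "ip u u \<le> r * hnorm u"
  shows "hnorm u \<le> r"
  using assms hnorm_nonneg[OF assms(1)]
  by (cases "hnorm u = 0") (auto simp: hnorm_squared[symmetric] power2_eq_square)

lemma ball_eq_halfspaces:
  assumes "0 \<le> r"
  shows "{u \<in> H. ip u u \<le> r\<^sup>2} = {u \<in> H. \<forall>(g, c)\<in>(\<lambda>g. (g, r * hnorm g)) ` H. ip u g \<le> c}"
proof safe
  fix u g assume u: "u \<in> H" "ip u u \<le> r\<^sup>2" and g: "g \<in> H"
  have "hnorm u \<le> r"
    by (rule power2_le_imp_le) (use u assms in \<open>simp_all add: hnorm_squared\<close>)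
  then have "\<bar>ip u g\<bar> \<le> r * hnorm g"
    using Cauchy_Schwarz[OF u(1) g] hnorm_nonneg[OF g] by (meson mult_right_mono order_trans)
  then show "ip u g \<le> r * hnorm g" by simp
next
  fix u assume u: "u \<in> H" and le: "\<forall>(g, c)\<in>(\<lambda>g. (g, r * hnorm g)) ` H. ip u g \<le> c"
  then have "hnorm u \<le> r" using hnorm_le_of_ip_self_le[OF u(1) assms] by auto
  then show "ip u u \<le> r\<^sup>2"
    using hnorm_nonneg[OF u] by (metis hnorm_squared[OF u] power_mono)
qed

lemma ball_eq_empty: "\<alpha> < 0 \<Longrightarrow> {u \<in> H. ip u u \<le> \<alpha>} = {}"
  using ip_self_nonneg by force

lemma closedin_weak_ball: "closedin weak_topology {u \<in> H. ip u u \<le> \<alpha>}"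
proof (cases "\<alpha> < 0")
  case False
  then have "{u \<in> H. ip u u \<le> \<alpha>} = {u \<in> H. ip u u \<le> (sqrt \<alpha>)\<^sup>2}" by simp
  also have "\<dots> = {u \<in> H. \<forall>(g, c)\<in>(\<lambda>g. (g, sqrt \<alpha> * hnorm g)) ` H. ip u g \<le> c}"
    using False by (intro ball_eq_halfspaces) simp
  finally show ?thesis by (simp only:) (rule closedin_weak_halfspaces, blast)
qed (simp add: ball_eq_empty)

definition dual_ball :: "real \<Rightarrow> ('a \<Rightarrow> real) set" where
  "dual_ball r = {L \<in> topspace (product_topology (\<lambda>g. euclideanreal) H).
     (\<forall>g\<in>H. \<forall>k\<in>H. L (add g k) = L g + L k) \<and> (\<forall>g\<in>H. \<forall>c. L (scale c g) = c * L g)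
     \<and> (\<forall>g\<in>H. \<bar>L g\<bar> \<le> r * hnorm g)}"

lemma compactin_dual_ball: "compactin (product_topology (\<lambda>g. euclideanreal) H) (dual_ball r)"
proof -
  let ?P = "product_topology (\<lambda>g. euclideanreal) H"
  have proj: "continuous_map ?P euclideanreal (\<lambda>L. L g)" if "g \<in> H" for g
    using that by (rule continuous_map_product_projection)
  have "closedin ?P {L \<in> topspace ?P. L (add g k) - (L g + L k) \<in> {0}}" if "g \<in> H" "k \<in> H" for g k
    using that proof (intro closedin_continuous_map_preimage[where Y = euclideanreal])
    show "continuous_map ?P euclideanreal (\<lambda>L. L (add g k) - (L g + L k))"
      using that by (intro continuous_map_diff continuous_map_add proj add_closed)
  qed simp
  then have "closedin ?P {L \<in> topspace ?P. \<forall>g\<in>H. \<forall>k\<in>H. L (add g k) - (L g + L k) \<in> {0}}"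
    by (intro closedin_Collect_Ball)
  moreover have "closedin ?P {L \<in> topspace ?P. L (scale c g) - c * L g \<in> {0}}" if "g \<in> H" for g c
  proof (intro closedin_continuous_map_preimage[where Y = euclideanreal])
    show "continuous_map ?P euclideanreal (\<lambda>L. L (scale c g) - c * L g)"
      using that by (intro continuous_map_diff continuous_map_real_mult_left proj scale_closed)
  qed simp
  then have "closedin ?P {L \<in> topspace ?P. \<forall>g\<in>H. \<forall>c\<in>UNIV. L (scale c g) - c * L g \<in> {0}}"
    by (intro closedin_Collect_Ball)
  moreover have "closedin ?P {L \<in> topspace ?P. \<forall>g\<in>H. L g \<in> {-(r * hnorm g)..r * hnorm g}}"
    using proj by (intro closedin_Collect_Ball closedin_continuous_map_preimage) auto
  ultimately have "closedin ?P
      ({L \<in> topspace ?P. \<forall>g\<in>H. \<forall>k\<in>H. L (add g k) - (L g + L k) \<in> {0}}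
       \<inter> {L \<in> topspace ?P. \<forall>g\<in>H. \<forall>c\<in>UNIV. L (scale c g) - c * L g \<in> {0}}
       \<inter> {L \<in> topspace ?P. \<forall>g\<in>H. L g \<in> {-(r * hnorm g)..r * hnorm g}})"
    by (intro closedin_Int)
  moreover have "dual_ball r
      = {L \<in> topspace ?P. \<forall>g\<in>H. \<forall>k\<in>H. L (add g k) - (L g + L k) \<in> {0}}
       \<inter> {L \<in> topspace ?P. \<forall>g\<in>H. \<forall>c\<in>UNIV. L (scale c g) - c * L g \<in> {0}}
       \<inter> {L \<in> topspace ?P. \<forall>g\<in>H. L g \<in> {-(r * hnorm g)..r * hnorm g}}"
    by (auto simp: dual_ball_def abs_le_iff)
  ultimately have "closedin ?P (dual_ball r)" by simp
  moreover have "dual_ball r \<subseteq> PiE H (\<lambda>g. {-(r * hnorm g)..r * hnorm g})"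
    by (auto simp: dual_ball_def PiE_iff extensional_def abs_le_iff)
  moreover have "compactin ?P (PiE H (\<lambda>g. {-(r * hnorm g)..r * hnorm g}))"
    by (simp add: compactin_PiE)
  ultimately show ?thesis by (metis closed_compactin)
qed

end

locale complete_semi_inner_product_space = semi_inner_product_space +
  assumes complete: "\<lbrakk>\<And>n. s n \<in> H; \<And>e. 0 < e \<Longrightarrow> \<exists>N. \<forall>m\<ge>N. \<forall>n\<ge>N. hdist (s m) (s n) < e\<rbrakk>
      \<Longrightarrow> \<exists>z\<in>H. (\<lambda>n. hdist z (s n)) \<longlonglongrightarrow> 0"
begin

end

lemma (in semi_inner_product_space) minimizing_sequence_Cauchy:
  assumes V: "V \<subseteq> H"
    and midpoint: "\<And>x y. x \<in> V \<Longrightarrow> y \<in> V \<Longrightarrow> scale (1/2) (add x y) \<in> V"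
    and d_le: "\<And>g. g \<in> V \<Longrightarrow> d \<le> ip g g"
    and s: "\<And>n. s n \<in> V" and s_le: "\<And>n. ip (s n) (s n) < d + 1 / Suc n"
    and "0 < e"
  shows "\<exists>N. \<forall>m\<ge>N. \<forall>n\<ge>N. hdist (s m) (s n) < e"
proof -
  have sH: "s n \<in> H" for n using s V by blast
  have sum_ge: "4 * d \<le> ip (add x y) (add x y)" if "x \<in> V" "y \<in> V" for x y
  proof -
    have xy: "x \<in> H" "y \<in> H" using that V by auto
    have "d \<le> ip (scale (1/2) (add x y)) (scale (1/2) (add x y))"
      using d_le midpoint[OF that] by blast
    also have "\<dots> = ip (add x y) (add x y) / 4"
      using xy by (simp add: ip_scale_left ip_scale_right add_closed scale_closed)
    finally show ?thesis by simp
  qed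
  obtain N :: nat where N: "1 / Suc N < e\<^sup>2 / 4"
    using reals_Archimedean[of "e\<^sup>2 / 4"] \<open>0 < e\<close> by (auto simp: inverse_eq_divide)
  have "hdist (s m) (s n) < e" if "m \<ge> N" "n \<ge> N" for m n
  proof -
    have "1 / Suc m \<le> 1 / Suc N" "1 / Suc n \<le> 1 / Suc N"
      using that by (simp_all add: frac_le)
    moreover have "(hdist (s m) (s n))\<^sup>2
        = 2 * ip (s m) (s m) + 2 * ip (s n) (s n) - ip (add (s m) (s n)) (add (s m) (s n))"
      using parallelogram[OF sH sH] by (simp add: algebra_simps)
    ultimately have "(hdist (s m) (s n))\<^sup>2 < e\<^sup>2"
      using s_le[of m] s_le[of n] sum_ge[OF s s, of m n] N by linarith
    then show ?thesis
      using \<open>0 < e\<close> by (simp add: hdist_def hnorm_nonneg diff_closed sH power_less_imp_less_base)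
  qed
  then show ?thesis by blast
qed

context complete_semi_inner_product_space
begin

lemma exists_min_norm_point:
  assumes V: "V \<subseteq> H" "V \<noteq> {}"
    and midpoint: "\<And>x y. x \<in> V \<Longrightarrow> y \<in> V \<Longrightarrow> scale (1/2) (add x y) \<in> V"
    and closed: "\<And>z s. z \<in> H \<Longrightarrow> (\<And>n. s n \<in> V) \<Longrightarrow> (\<lambda>n. hdist z (s n)) \<longlonglongrightarrow> 0 \<Longrightarrow> z \<in> V"
  obtains z where "z \<in> V" "\<And>g. g \<in> V \<Longrightarrow> ip z z \<le> ip g g"
proof -
  define d where "d = Inf ((\<lambda>g. ip g g) ` V)"
  have bdd: "bdd_below ((\<lambda>g. ip g g) ` V)"
    using V(1) ip_self_nonneg by (intro bdd_belowI[of _ 0]) auto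
  have d_le: "d \<le> ip g g" if "g \<in> V" for g
    unfolding d_def using bdd that by (intro cInf_lower) auto
  have d_nonneg: "0 \<le> d"
    unfolding d_def using V ip_self_nonneg by (intro cInf_greatest) auto
  have "\<exists>g\<in>V. ip g g < d + 1 / Suc n" for n
    using cInf_less_iff[OF _ bdd, of "d + 1 / Suc n"] V(2) by (auto simp: d_def)
  then obtain s where s: "\<And>n. s n \<in> V" and s_le: "\<And>n. ip (s n) (s n) < d + 1 / Suc n"
    by metis
  have sH: "s n \<in> H" for n using s V(1) by blast
  obtain z where zH: "z \<in> H" and lim: "(\<lambda>n. hdist z (s n)) \<longlonglongrightarrow> 0"
    using complete[OF sH minimizing_sequence_Cauchy[OF V(1) midpoint d_le s s_le]] by blast
  have "(\<lambda>n. sqrt (d + 1 / Suc n) + hdist z (s n)) \<longlonglongrightarrow> sqrt (d + 0) + 0"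
    by (intro tendsto_intros lim LIMSEQ_Suc[OF lim_inverse_n'])
  moreover have "\<exists>N. \<forall>n\<ge>N. hnorm z \<le> sqrt (d + 1 / Suc n) + hdist z (s n)"
  proof (intro exI allI impI)
    fix n
    have "hnorm (s n) \<le> sqrt (d + 1 / Suc n)"
      using s_le[of n] by (simp add: hnorm_def)
    then show "hnorm z \<le> sqrt (d + 1 / Suc n) + hdist z (s n)"
      using hnorm_le_add_hdist[OF zH sH, of n] by linarith
  qed
  ultimately have "hnorm z \<le> sqrt (d + 0) + 0" by (rule LIMSEQ_le_const)
  then have "hnorm z \<le> sqrt d" by simp
  then have "ip z z \<le> d"
    using zH d_nonneg by (metis hnorm_def real_sqrt_le_iff)
  then show ?thesis using that closed[OF zH s lim] d_le by fastforce
qed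

lemma exists_min_norm_point_level_set:
  assumes additive: "\<And>g k. g \<in> H \<Longrightarrow> k \<in> H \<Longrightarrow> L (add g k) = L g + L k"
    and homogeneous: "\<And>g c. g \<in> H \<Longrightarrow> L (scale c g) = c * L g"
    and bounded: "\<And>g. g \<in> H \<Longrightarrow> \<bar>L g\<bar> \<le> C * hnorm g"
    and g0: "g0 \<in> H" "L g0 \<noteq> 0"
  obtains z where "z \<in> H" "L z = 1" "\<And>g. g \<in> H \<Longrightarrow> L g = 1 \<Longrightarrow> ip z z \<le> ip g g"
proof -
  define V where "V = {g \<in> H. L g = 1}"
  have VH: "V \<subseteq> H" by (auto simp: V_def)
  have "scale (1 / L g0) g0 \<in> V"
    using g0 by (simp add: V_def homogeneous scale_closed)
  then have V_ne: "V \<noteq> {}" by blast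
  have V_mid: "scale (1/2) (add x y) \<in> V" if "x \<in> V" "y \<in> V" for x y
    using that by (simp add: V_def additive homogeneous add_closed scale_closed)
  have V_closed: "z \<in> V" if zH: "z \<in> H" and s: "\<And>n. s n \<in> V"
    and lim: "(\<lambda>n. hdist z (s n)) \<longlonglongrightarrow> 0" for z s
  proof -
    have "\<bar>L z - 1\<bar> \<le> C * hdist z (s n)" for n
      using bounded[OF diff_closed[OF zH, of "s n"]] s[of n] zH
      by (simp add: V_def hdist_def additive homogeneous scale_closed)
    with tendsto_mult_right_zero[OF lim] have "\<bar>L z - 1\<bar> \<le> 0"
      by (intro LIMSEQ_le_const[of "\<lambda>n. C * hdist z (s n)"]) auto
    then show ?thesis using zH by (simp add: V_def)
  qed
  obtain z where "z \<in> V" "\<And>g. g \<in> V \<Longrightarrow> ip z z \<le> ip g g"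
    using exists_min_norm_point[of V] VH V_ne V_mid V_closed by blast
  then show ?thesis by (intro that) (auto simp: V_def)
qed

lemma (in semi_inner_product_space) min_norm_point_orthogonal:
  assumes additive: "\<And>g k. g \<in> H \<Longrightarrow> k \<in> H \<Longrightarrow> L (add g k) = L g + L k"
    and homogeneous: "\<And>g c. g \<in> H \<Longrightarrow> L (scale c g) = c * L g"
    and z: "z \<in> H" "L z = 1" and z_min: "\<And>g. g \<in> H \<Longrightarrow> L g = 1 \<Longrightarrow> ip z z \<le> ip g g"
    and k: "k \<in> H" "L k = 0"
  shows "ip z k = 0"
proof -
  have "0 \<le> 0 + 2 * ip z k * t + ip k k * t\<^sup>2" for t
  proof -
    have "ip z z \<le> ip (add z (scale t k)) (add z (scale t k))"
      using z k by (intro z_min) (simp_all add: additive homogeneous add_closed scale_closed)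
    then show ?thesis using ip_self_add_scale[OF z(1) k(1), of t] by simp
  qed
  then have "(ip z k)\<^sup>2 \<le> 0 * ip k k"
    using ip_self_nonneg[OF k(1)] by (rule nonneg_quadratic_discriminant)
  then show ?thesis by simp
qed

lemma Riesz_representation:
  assumes "H \<noteq> {}"
    and additive: "\<And>g k. g \<in> H \<Longrightarrow> k \<in> H \<Longrightarrow> L (add g k) = L g + L k"
    and homogeneous: "\<And>g c. g \<in> H \<Longrightarrow> L (scale c g) = c * L g"
    and bounded: "\<And>g. g \<in> H \<Longrightarrow> \<bar>L g\<bar> \<le> C * hnorm g"
  obtains u where "u \<in> H" "\<And>g. g \<in> H \<Longrightarrow> ip u g = L g"
proof (cases "\<forall>g\<in>H. L g = 0")
  case True
  then obtain g0 where "g0 \<in> H" using assms(1) by blast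
  then show ?thesis
    using that[of "scale 0 g0"] True by (simp add: scale_closed ip_scale_left)
next
  case False
  then obtain g0 where "g0 \<in> H" "L g0 \<noteq> 0" by blast
  then obtain z where z: "z \<in> H" "L z = 1" and z_min: "\<And>g. g \<in> H \<Longrightarrow> L g = 1 \<Longrightarrow> ip z z \<le> ip g g"
    using exists_min_norm_point_level_set[OF additive homogeneous bounded] by blast
  have z_ne: "ip z z \<noteq> 0"
    using bounded[OF z(1)] z(2) by (auto simp: hnorm_def)
  have z_ip: "ip z g = L g * ip z z" if gH: "g \<in> H" for g
  proof -
    have "ip z (add g (scale (- L g) z)) = 0"
      using gH z by (intro min_norm_point_orthogonal[OF additive homogeneous z z_min])
        (simp_all add: additive homogeneous add_closed scale_closed)
    then show ?thesis using gH z by (simp add: ip_add_right ip_scale_right scale_closed)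
  qed
  show ?thesis
  proof (rule that)
    show "scale (1 / ip z z) z \<in> H" using z(1) by (rule scale_closed)
    fix g assume gH: "g \<in> H"
    have "ip (scale (1 / ip z z) z) g = ip z g / ip z z" by (simp add: ip_scale_left[OF z(1) gH])
    then show "ip (scale (1 / ip z z) z) g = L g" using z_ip[OF gH] z_ne by simp
  qed
qed

lemma weak_ball_image_eq:
  assumes "H \<noteq> {}" "0 \<le> r"
  shows "(\<lambda>u. restrict (\<lambda>g. ip u g) H) ` {u \<in> H. ip u u \<le> r\<^sup>2} = dual_ball r"
proof (intro equalityI subsetI)
  fix L assume "L \<in> (\<lambda>u. restrict (\<lambda>g. ip u g) H) ` {u \<in> H. ip u u \<le> r\<^sup>2}"
  then obtain u where u: "u \<in> H" "ip u u \<le> r\<^sup>2" and L: "L = restrict (\<lambda>g. ip u g) H" by blast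
  have "hnorm u \<le> r"
    by (rule power2_le_imp_le) (use u assms(2) in \<open>simp_all add: hnorm_squared\<close>)
  then have "\<bar>ip u g\<bar> \<le> r * hnorm g" if "g \<in> H" for g
    using Cauchy_Schwarz[OF u(1) that] hnorm_nonneg[OF that] by (meson mult_right_mono order_trans)
  then show "L \<in> dual_ball r"
    using u(1) by (auto simp: L dual_ball_def add_closed scale_closed ip_add_right ip_scale_right)
next
  fix L assume L: "L \<in> dual_ball r"
  obtain u where u: "u \<in> H" and rep: "\<And>g. g \<in> H \<Longrightarrow> ip u g = L g"
    by (rule Riesz_representation[of L r]) (use L assms(1) in \<open>auto simp: dual_ball_def\<close>)
  have "ip u u \<le> r * hnorm u"
    using L u by (auto simp: rep dual_ball_def abs_le_iff)
  then have "hnorm u \<le> r" using hnorm_le_of_ip_self_le[OF u assms(2)] by blast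
  then have "ip u u \<le> r\<^sup>2"
    using u hnorm_nonneg[OF u] by (auto simp: hnorm_squared[symmetric] power_mono)
  moreover have "restrict (\<lambda>g. ip u g) H = L"
    using L rep by (auto simp: dual_ball_def PiE_iff extensional_def)
  ultimately show "L \<in> (\<lambda>u. restrict (\<lambda>g. ip u g) H) ` {u \<in> H. ip u u \<le> r\<^sup>2}"
    using u by blast
qed

lemma compactin_weak_ball: "compactin weak_topology {u \<in> H. ip u u \<le> \<alpha>}"
proof (cases "\<alpha> < 0 \<or> H = {}")
  case True
  then have "{u \<in> H. ip u u \<le> \<alpha>} = {}" using ball_eq_empty by auto
  then show ?thesis by (metis compactin_empty)
next
  case False
  then have eq: "{u \<in> H. ip u u \<le> \<alpha>} = {u \<in> H. ip u u \<le> (sqrt \<alpha>)\<^sup>2}" by simp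
  have "(\<lambda>u. restrict (\<lambda>g. ip u g) H) ` {u \<in> H. ip u u \<le> \<alpha>} = dual_ball (sqrt \<alpha>)"
    unfolding eq using False by (intro weak_ball_image_eq) auto
  then have "compactin (product_topology (\<lambda>g. euclideanreal) H)
      ((\<lambda>u. restrict (\<lambda>g. ip u g) H) ` {u \<in> H. ip u u \<le> \<alpha>})"
    by (simp add: compactin_dual_ball)
  then show ?thesis
    unfolding weak_topology_def by (rule compactin_pullback_topology[rotated]) auto
qed

end

definition square_integrable :: "'a measure \<Rightarrow> ('a \<Rightarrow> real) \<Rightarrow> bool" where
  "square_integrable M v \<longleftrightarrow> v \<in> borel_measurable M \<and> integrable M (\<lambda>t. (v t)\<^sup>2)"

lemma integrable_mult_of_square_integrable:
  assumes "square_integrable M v" "square_integrable M w"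
  shows "integrable M (\<lambda>t. v t * w t)"
proof (rule Bochner_Integration.integrable_bound)
  show "integrable M (\<lambda>t. (v t)\<^sup>2 + (w t)\<^sup>2)"
    using assms by (auto simp: square_integrable_def)
  show "(\<lambda>t. v t * w t) \<in> borel_measurable M"
    using assms by (auto simp: square_integrable_def)
  have "\<bar>v t * w t\<bar> \<le> (v t)\<^sup>2 + (w t)\<^sup>2" for t
  proof -
    have "\<bar>v t * w t\<bar> \<le> 2 * \<bar>v t\<bar> * \<bar>w t\<bar>" by (simp add: abs_mult)
    also have "\<dots> \<le> \<bar>v t\<bar>\<^sup>2 + \<bar>w t\<bar>\<^sup>2" by (rule sum_squares_bound)
    finally show ?thesis by simp
  qed
  then show "AE t in M. norm (v t * w t) \<le> norm ((v t)\<^sup>2 + (w t)\<^sup>2)" by simp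
qed

lemma square_integrable_add:
  assumes "square_integrable M v" "square_integrable M w"
  shows "square_integrable M (\<lambda>t. v t + w t)"
proof -
  have "integrable M (\<lambda>t. (v t)\<^sup>2 + 2 * (v t * w t) + (w t)\<^sup>2)"
    using assms integrable_mult_of_square_integrable[OF assms] by (auto simp: square_integrable_def)
  moreover have "(\<lambda>t. v t + w t) \<in> borel_measurable M"
    using assms by (auto simp: square_integrable_def intro: borel_measurable_add)
  ultimately show ?thesis
    by (simp add: square_integrable_def power2_sum algebra_simps)
qed

lemma square_integrable_scale:
  "square_integrable M v \<Longrightarrow> square_integrable M (\<lambda>t. c * v t)"
  by (simp add: square_integrable_def power_mult_distrib borel_measurable_times)

lemma square_integrable_diff:
  "square_integrable M v \<Longrightarrow> square_integrable M w \<Longrightarrow> square_integrable M (\<lambda>t. v t - w t)"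
  using square_integrable_add[of M v "\<lambda>t. (-1) * w t"] square_integrable_scale[of M w "-1"] by simp

lemma integral_square_nonneg:
  fixes v :: "'a \<Rightarrow> real"
  shows "0 \<le> integral\<^sup>L M (\<lambda>t. (v t)\<^sup>2)"
  by (rule integral_nonneg_AE) simp

context finite_measure
begin

lemma square_integrable_of_bounded:
  assumes "v \<in> borel_measurable M" "AE t in M. \<bar>v t\<bar> \<le> B"
  shows "square_integrable M v"
proof -
  have "AE t in M. norm ((v t)\<^sup>2) \<le> B\<^sup>2"
    using assms(2) by eventually_elim (metis abs_ge_zero norm_power power2_abs power_mono real_norm_def)
  then have "integrable M (\<lambda>t. (v t)\<^sup>2)"
    using assms(1) by (intro integrable_const_bound) auto
  then show ?thesis using assms(1) by (simp add: square_integrable_def)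
qed

lemma integrable_of_square_integrable:
  assumes "square_integrable M v"
  shows "integrable M v"
proof (rule Bochner_Integration.integrable_bound)
  show "integrable M (\<lambda>t. 1 + (v t)\<^sup>2)"
    using assms by (auto simp: square_integrable_def)
  show "v \<in> borel_measurable M" using assms by (simp add: square_integrable_def)
  have "\<bar>v t\<bar> \<le> 1 + (v t)\<^sup>2" for t
    using sum_squares_bound[of 1 "\<bar>v t\<bar>"] by simp
  then show "AE t in M. norm (v t) \<le> norm (1 + (v t)\<^sup>2)" by simp
qed

lemma integral_abs_le_integral_square:
  assumes "square_integrable M w" "0 < \<delta>"
  shows "integral\<^sup>L M (\<lambda>t. \<bar>w t\<bar>) \<le> \<delta> * measure M (space M) + integral\<^sup>L M (\<lambda>t. (w t)\<^sup>2) / \<delta>"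
proof -
  have "\<bar>w t\<bar> \<le> \<delta> + (w t)\<^sup>2 / \<delta>" for t
  proof (cases "\<bar>w t\<bar> \<le> \<delta>")
    case False
    then have "\<delta> * \<bar>w t\<bar> \<le> \<bar>w t\<bar> * \<bar>w t\<bar>" by (intro mult_right_mono) auto
    also have "\<dots> = (w t)\<^sup>2" by (simp add: power2_eq_square)
    finally have "\<bar>w t\<bar> \<le> (w t)\<^sup>2 / \<delta>" using assms(2) by (simp add: pos_le_divide_eq mult.commute)
    then show ?thesis using assms(2) by simp
  next
    case True
    moreover have "0 \<le> (w t)\<^sup>2 / \<delta>" using assms(2) by simp
    ultimately show ?thesis by linarith
  qed
  then have "integral\<^sup>L M (\<lambda>t. \<bar>w t\<bar>) \<le> integral\<^sup>L M (\<lambda>t. \<delta> + (w t)\<^sup>2 / \<delta>)"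
    using assms(1) integrable_of_square_integrable[OF assms(1)]
    by (intro integral_mono) (auto simp: square_integrable_def)
  also have "\<dots> = \<delta> * measure M (space M) + integral\<^sup>L M (\<lambda>t. (w t)\<^sup>2) / \<delta>"
    using assms(1) by (simp add: square_integrable_def)
  finally show ?thesis .
qed

end

lemma square_integrable_of_AE_limit:
  fixes f :: "nat \<Rightarrow> 'a \<Rightarrow> real"
  assumes [measurable]: "\<And>i. f i \<in> borel_measurable M" "g \<in> borel_measurable M"
    and lim: "AE t in M. (\<lambda>i. f i t) \<longlonglongrightarrow> g t"
    and bound: "\<And>i. square_integrable M (f i) \<and> integral\<^sup>L M (\<lambda>t. (f i t)\<^sup>2) \<le> e"
  shows "square_integrable M g \<and> integral\<^sup>L M (\<lambda>t. (g t)\<^sup>2) \<le> e"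
proof -
  have "(\<integral>\<^sup>+ t. ennreal ((g t)\<^sup>2) \<partial>M) = (\<integral>\<^sup>+ t. liminf (\<lambda>i. ennreal ((f i t)\<^sup>2)) \<partial>M)"
  proof (rule nn_integral_cong_AE)
    show "AE t in M. ennreal ((g t)\<^sup>2) = liminf (\<lambda>i. ennreal ((f i t)\<^sup>2))"
      using lim
    proof eventually_elim
      case (elim t)
      then have "(\<lambda>i. ennreal ((f i t)\<^sup>2)) \<longlonglongrightarrow> ennreal ((g t)\<^sup>2)"
        by (intro tendsto_ennrealI tendsto_intros)
      then have "liminf (\<lambda>i. ennreal ((f i t)\<^sup>2)) = ennreal ((g t)\<^sup>2)"
        by (intro lim_imp_Liminf) auto
      then show ?case by simp
    qed
  qed
  also have "\<dots> \<le> liminf (\<lambda>i. \<integral>\<^sup>+ t. ennreal ((f i t)\<^sup>2) \<partial>M)"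
    by (rule nn_integral_liminf) measurable
  also have "\<dots> = liminf (\<lambda>i. ennreal (integral\<^sup>L M (\<lambda>t. (f i t)\<^sup>2)))"
    using bound by (simp add: nn_integral_eq_integral square_integrable_def)
  also have "\<dots> \<le> liminf (\<lambda>i. ennreal e)"
    using bound by (intro Liminf_mono) (simp add: ennreal_leI)
  finally have le: "(\<integral>\<^sup>+ t. ennreal ((g t)\<^sup>2) \<partial>M) \<le> ennreal e" by (simp add: Liminf_const)
  then have int: "integrable M (\<lambda>t. (g t)\<^sup>2)"
    by (intro integrableI_bounded) (auto simp: top.not_eq_extremum le_less_trans)
  then have "ennreal (integral\<^sup>L M (\<lambda>t. (g t)\<^sup>2)) \<le> ennreal e"
    using le by (simp add: nn_integral_eq_integral)
  moreover have "0 \<le> e" using bound[of 0] integral_square_nonneg[of M "f 0"] by linarith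
  ultimately show ?thesis using int by (simp add: square_integrable_def)
qed

context finite_measure
begin

lemma L1_Cauchy_of_L2_Cauchy:
  fixes s :: "nat \<Rightarrow> 'a \<Rightarrow> real"
  assumes s: "\<And>n. square_integrable M (s n)"
    and Cauchy: "\<And>e. 0 < e \<Longrightarrow> \<exists>N. \<forall>m\<ge>N. \<forall>n\<ge>N. integral\<^sup>L M (\<lambda>t. (s m t - s n t)\<^sup>2) < e"
    and "0 < e"
  shows "\<exists>N. \<forall>m\<ge>N. \<forall>n\<ge>N. (LINT t|M. norm (s m t - s n t)) < e"
proof -
  define \<mu> where "\<mu> = measure M (space M)"
  define \<delta> where "\<delta> = e / (2 * (\<mu> + 1))"
  have \<mu>: "0 \<le> \<mu>" by (simp add: \<mu>_def)
  have "\<mu> / (\<mu> + 1) < 1" using \<mu> by (simp add: divide_less_eq not_less)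
  then have "e / 2 * (\<mu> / (\<mu> + 1)) < e / 2 * 1"
    using \<open>0 < e\<close> by (intro mult_strict_left_mono) auto
  moreover have "\<delta> * \<mu> = e / 2 * (\<mu> / (\<mu> + 1))" using \<mu> by (simp add: \<delta>_def)
  ultimately have \<delta>: "0 < \<delta>" "\<delta> * measure M (space M) < e / 2"
    using \<open>0 < e\<close> \<mu> by (simp_all add: \<delta>_def \<mu>_def[symmetric])
  obtain N where N: "\<And>m n. m \<ge> N \<Longrightarrow> n \<ge> N \<Longrightarrow> integral\<^sup>L M (\<lambda>t. (s m t - s n t)\<^sup>2) < \<delta> * (e / 2)"
    using Cauchy[of "\<delta> * (e / 2)"] \<delta> \<open>0 < e\<close> by auto
  have "(LINT t|M. norm (s m t - s n t)) < e" if "m \<ge> N" "n \<ge> N" for m n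
  proof -
    have "integral\<^sup>L M (\<lambda>t. (s m t - s n t)\<^sup>2) / \<delta> < e / 2"
      using N[OF that] \<delta>(1) by (simp add: divide_less_eq mult.commute)
    then show ?thesis
      using integral_abs_le_integral_square[OF square_integrable_diff[OF s s] \<delta>(1), of m n] \<delta>(2)
      by (simp only: real_norm_def)
  qed
  then show ?thesis by blast
qed

lemma square_integrable_complete:
  fixes s :: "nat \<Rightarrow> 'a \<Rightarrow> real"
  assumes s: "\<And>n. square_integrable M (s n)"
    and Cauchy: "\<And>e. 0 < e \<Longrightarrow> \<exists>N. \<forall>m\<ge>N. \<forall>n\<ge>N. integral\<^sup>L M (\<lambda>t. (s m t - s n t)\<^sup>2) < e"
  obtains v where "square_integrable M v" "(\<lambda>n. integral\<^sup>L M (\<lambda>t. (v t - s n t)\<^sup>2)) \<longlonglongrightarrow> 0"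
proof -
  have [measurable]: "s n \<in> borel_measurable M" for n using s by (simp add: square_integrable_def)
  have L1_Cauchy: "\<exists>N. \<forall>m\<ge>N. \<forall>n\<ge>N. (LINT t|M. norm (s m t - s n t)) < e" if "0 < e" for e
    using s Cauchy that by (rule L1_Cauchy_of_L2_Cauchy)
  obtain r where r: "strict_mono r" and AE_Cauchy: "AE t in M. Cauchy (\<lambda>i. s (r i) t)"
    using cauchy_L1_AE_cauchy_subseq[OF integrable_of_square_integrable[OF s] L1_Cauchy] by blast
  define v where "v t = lim (\<lambda>i. s (r i) t)" for t
  have [measurable]: "v \<in> borel_measurable M" unfolding v_def by measurable
  have lim: "AE t in M. (\<lambda>i. s (r i) t) \<longlonglongrightarrow> v t"
    using AE_Cauchy by eventually_elim (simp add: v_def Cauchy_convergent_iff convergent_LIMSEQ_iff)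
  have close: "square_integrable M (\<lambda>t. v t - s n t) \<and> integral\<^sup>L M (\<lambda>t. (v t - s n t)\<^sup>2) \<le> e"
    if N: "\<And>m n. m \<ge> N \<Longrightarrow> n \<ge> N \<Longrightarrow> integral\<^sup>L M (\<lambda>t. (s m t - s n t)\<^sup>2) < e" and "n \<ge> N" for e N n
  proof (rule square_integrable_of_AE_limit)
    show "AE t in M. (\<lambda>i. s (r (i + N)) t - s n t) \<longlonglongrightarrow> v t - s n t"
      using lim by eventually_elim (intro tendsto_intros LIMSEQ_ignore_initial_segment)
    show "square_integrable M (\<lambda>t. s (r (i + N)) t - s n t) \<and> integral\<^sup>L M (\<lambda>t. (s (r (i + N)) t - s n t)\<^sup>2) \<le> e" for i
      using N[of "r (i + N)" n] seq_suble[OF r, of "i + N"] \<open>n \<ge> N\<close> square_integrable_diff[OF s s] by simp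
  qed measurable
  obtain N1 where N1: "\<And>m n. m \<ge> N1 \<Longrightarrow> n \<ge> N1 \<Longrightarrow> integral\<^sup>L M (\<lambda>t. (s m t - s n t)\<^sup>2) < 1"
    using Cauchy[of 1] by auto
  have "square_integrable M (\<lambda>t. (v t - s N1 t) + s N1 t)"
    using close[OF N1 order_refl] s by (intro square_integrable_add) auto
  then have "square_integrable M v" by simp
  moreover have "(\<lambda>n. integral\<^sup>L M (\<lambda>t. (v t - s n t)\<^sup>2)) \<longlonglongrightarrow> 0"
  proof (rule LIMSEQ_I)
    fix e :: real assume "0 < e"
    then obtain N where N: "\<And>m n. m \<ge> N \<Longrightarrow> n \<ge> N \<Longrightarrow> integral\<^sup>L M (\<lambda>t. (s m t - s n t)\<^sup>2) < e / 2"
      using Cauchy[of "e / 2"] by auto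
    have "norm (integral\<^sup>L M (\<lambda>t. (v t - s n t)\<^sup>2) - 0) < e" if "n \<ge> N" for n
      using close[OF N that] integral_square_nonneg[of M "\<lambda>t. v t - s n t"] \<open>0 < e\<close> by simp
    then show "\<exists>N. \<forall>n\<ge>N. norm (integral\<^sup>L M (\<lambda>t. (v t - s n t)\<^sup>2) - 0) < e" by blast
  qed
  ultimately show ?thesis using that by blast
qed

lemma AE_abs_le_of_pairing_le:
  assumes v: "square_integrable M v" and "0 \<le> c"
    and pairing: "\<And>w. square_integrable M w \<Longrightarrow> integral\<^sup>L M (\<lambda>t. v t * w t) \<le> integral\<^sup>L M (\<lambda>t. c * \<bar>w t\<bar>)"
  shows "AE t in M. \<bar>v t\<bar> \<le> c"
proof -
  have [measurable]: "v \<in> borel_measurable M" using v by (simp add: square_integrable_def)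
  define w where "w t = (if c < \<bar>v t\<bar> then sgn (v t) else 0)" for t
  have w_meas [measurable]: "w \<in> borel_measurable M" unfolding w_def by measurable
  have w: "square_integrable M w"
    by (rule square_integrable_of_bounded[OF w_meas, of 1]) (auto simp: w_def sgn_real_def)
  define excess where "excess t = (if c < \<bar>v t\<bar> then \<bar>v t\<bar> - c else 0)" for t
  have excess_eq: "excess t = v t * w t - c * \<bar>w t\<bar>" for t
    using \<open>0 \<le> c\<close> by (auto simp: excess_def w_def sgn_real_def)
  have int: "integrable M (\<lambda>t. v t * w t)" "integrable M (\<lambda>t. c * \<bar>w t\<bar>)"
    using integrable_mult_of_square_integrable[OF v w] integrable_of_square_integrable[OF w] by auto
  have "integral\<^sup>L M excess = integral\<^sup>L M (\<lambda>t. v t * w t) - integral\<^sup>L M (\<lambda>t. c * \<bar>w t\<bar>)"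
    unfolding excess_eq using int by (rule Bochner_Integration.integral_diff)
  then have "integral\<^sup>L M excess \<le> 0"
    using pairing[OF w] by simp
  moreover have nonneg: "AE t in M. 0 \<le> excess t" by (simp add: excess_def)
  ultimately have "integral\<^sup>L M excess = 0" using integral_nonneg_AE[OF nonneg] by simp
  then have "AE t in M. excess t = 0"
    using integral_nonneg_eq_0_iff_AE[OF _ nonneg] int unfolding excess_eq by simp
  then show ?thesis by eventually_elim (auto simp: excess_def split: if_splits)
qed

end

abbreviation MT :: "real measure" where
  "MT \<equiv> lebesgue_on {0..T_end}"

interpretation MT: finite_measure MT
  by (rule finite_measure_lebesgue_on) auto

definition addU :: "(real \<Rightarrow> real) \<times> (real \<Rightarrow> real) \<Rightarrow> (real \<Rightarrow> real) \<times> (real \<Rightarrow> real) \<Rightarrow> (real \<Rightarrow> real) \<times> (real \<Rightarrow> real)" where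
  "addU u v = (\<lambda>t. fst u t + fst v t, \<lambda>t. snd u t + snd v t)"

definition scaleU :: "real \<Rightarrow> (real \<Rightarrow> real) \<times> (real \<Rightarrow> real) \<Rightarrow> (real \<Rightarrow> real) \<times> (real \<Rightarrow> real)" where
  "scaleU c u = (\<lambda>t. c * fst u t, \<lambda>t. c * snd u t)"

lemma mem_U_iff: "u \<in> U \<longleftrightarrow> square_integrable MT (fst u) \<and> square_integrable MT (snd u)"
  by (simp add: U_def L2T_def square_integrable_def mem_Times_iff)

lemma integrable_innerU:
  assumes "u \<in> U" "g \<in> U"
  shows "integrable MT (\<lambda>t. fst u t * fst g t + snd u t * snd g t)"
  using assms by (auto simp: mem_U_iff intro!: integrable_mult_of_square_integrable)

interpretation U: semi_inner_product_space U addU scaleU innerU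
proof
  fix u v w :: "(real \<Rightarrow> real) \<times> (real \<Rightarrow> real)" and c :: real
  show "u \<in> U \<Longrightarrow> v \<in> U \<Longrightarrow> addU u v \<in> U"
    by (auto simp: mem_U_iff addU_def intro: square_integrable_add)
  show "u \<in> U \<Longrightarrow> scaleU c u \<in> U"
    by (auto simp: mem_U_iff scaleU_def intro: square_integrable_scale)
  show "innerU u v = innerU v u"
    by (simp add: innerU_def mult.commute)
  show "innerU (addU u v) w = innerU u w + innerU v w" if "u \<in> U" "v \<in> U" "w \<in> U"
  proof -
    have "innerU (addU u v) w = integral\<^sup>L MT (\<lambda>t. (fst u t * fst w t + snd u t * snd w t)
        + (fst v t * fst w t + snd v t * snd w t))"
      by (simp add: innerU_def addU_def algebra_simps)
    then show ?thesis
      using integrable_innerU[OF that(1,3)] integrable_innerU[OF that(2,3)] by (simp add: innerU_def)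
  qed
  have "innerU (scaleU c u) w = integral\<^sup>L MT (\<lambda>t. c * (fst u t * fst w t + snd u t * snd w t))"
    by (simp add: innerU_def scaleU_def algebra_simps)
  then show "innerU (scaleU c u) w = c * innerU u w" by (simp add: innerU_def)
  show "0 \<le> innerU u u"
    unfolding innerU_def by (rule integral_nonneg_AE) simp
qed

lemma innerU_self: "innerU u u = integral\<^sup>L MT (\<lambda>t. (fst u t)\<^sup>2 + (snd u t)\<^sup>2)"
  by (simp add: innerU_def power2_eq_square)

lemma hdist_U_squared:
  assumes "u \<in> U" "v \<in> U"
  shows "(U.hdist u v)\<^sup>2 = integral\<^sup>L MT (\<lambda>t. (fst u t - fst v t)\<^sup>2) + integral\<^sup>L MT (\<lambda>t. (snd u t - snd v t)\<^sup>2)"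
proof -
  have "square_integrable MT (\<lambda>t. fst u t - fst v t)" "square_integrable MT (\<lambda>t. snd u t - snd v t)"
    using assms by (auto simp: mem_U_iff intro: square_integrable_diff)
  then show ?thesis
    using U.diff_closed[OF assms]
    by (simp add: U.hnorm_squared U.hdist_def innerU_self addU_def scaleU_def square_integrable_def)
qed

interpretation U: complete_semi_inner_product_space U addU scaleU innerU
proof
  fix s :: "nat \<Rightarrow> (real \<Rightarrow> real) \<times> (real \<Rightarrow> real)"
  assume s: "\<And>n. s n \<in> U"
    and Cauchy: "\<And>e. 0 < e \<Longrightarrow> \<exists>N. \<forall>m\<ge>N. \<forall>n\<ge>N. U.hdist (s m) (s n) < e"
  have Cauchy_sq: "\<exists>N. \<forall>m\<ge>N. \<forall>n\<ge>N. (U.hdist (s m) (s n))\<^sup>2 < e" if e: "0 < e" for e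
  proof -
    obtain N where N: "\<forall>m\<ge>N. \<forall>n\<ge>N. U.hdist (s m) (s n) < sqrt e"
      using Cauchy[of "sqrt e"] e by auto
    have "(U.hdist (s m) (s n))\<^sup>2 < (sqrt e)\<^sup>2" if "m \<ge> N" "n \<ge> N" for m n
      using N that U.hdist_nonneg[OF s s] by (intro power_strict_mono) auto
    then show ?thesis using e by auto
  qed
  have Cauchy_components: "\<exists>N. \<forall>m\<ge>N. \<forall>n\<ge>N. integral\<^sup>L MT (\<lambda>t. (fst (s m) t - fst (s n) t)\<^sup>2) < e
      \<and> integral\<^sup>L MT (\<lambda>t. (snd (s m) t - snd (s n) t)\<^sup>2) < e" if e: "0 < e" for e
  proof -
    obtain N where N: "\<forall>m\<ge>N. \<forall>n\<ge>N. (U.hdist (s m) (s n))\<^sup>2 < e" using Cauchy_sq[OF e] by blast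
    have "integral\<^sup>L MT (\<lambda>t. (fst (s m) t - fst (s n) t)\<^sup>2) < e
      \<and> integral\<^sup>L MT (\<lambda>t. (snd (s m) t - snd (s n) t)\<^sup>2) < e" if "m \<ge> N" "n \<ge> N" for m n
    proof -
      have "(U.hdist (s m) (s n))\<^sup>2 < e" using N that by blast
      then show ?thesis
        using hdist_U_squared[OF s s, of m n]
          integral_square_nonneg[of MT "\<lambda>t. fst (s m) t - fst (s n) t"]
          integral_square_nonneg[of MT "\<lambda>t. snd (s m) t - snd (s n) t"] by linarith
    qed
    then show ?thesis by blast
  qed
  obtain v1 where v1: "square_integrable MT v1"
    and lim1: "(\<lambda>n. integral\<^sup>L MT (\<lambda>t. (v1 t - fst (s n) t)\<^sup>2)) \<longlonglongrightarrow> 0"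
  proof (rule MT.square_integrable_complete)
    show "square_integrable MT (fst (s n))" for n using s by (simp add: mem_U_iff)
    show "\<exists>N. \<forall>m\<ge>N. \<forall>n\<ge>N. integral\<^sup>L MT (\<lambda>t. (fst (s m) t - fst (s n) t)\<^sup>2) < e" if "0 < e" for e
      using Cauchy_components[OF that] by blast
  qed
  obtain v2 where v2: "square_integrable MT v2"
    and lim2: "(\<lambda>n. integral\<^sup>L MT (\<lambda>t. (v2 t - snd (s n) t)\<^sup>2)) \<longlonglongrightarrow> 0"
  proof (rule MT.square_integrable_complete)
    show "square_integrable MT (snd (s n))" for n using s by (simp add: mem_U_iff)
    show "\<exists>N. \<forall>m\<ge>N. \<forall>n\<ge>N. integral\<^sup>L MT (\<lambda>t. (snd (s m) t - snd (s n) t)\<^sup>2) < e" if "0 < e" for e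
      using Cauchy_components[OF that] by blast
  qed
  have zU: "(v1, v2) \<in> U" using v1 v2 by (simp add: mem_U_iff)
  have "(\<lambda>n. sqrt ((U.hdist (v1, v2) (s n))\<^sup>2)) \<longlonglongrightarrow> sqrt (0 + 0)"
    unfolding hdist_U_squared[OF zU s] using tendsto_real_sqrt[OF tendsto_add[OF lim1 lim2]] by simp
  then show "\<exists>z\<in>U. (\<lambda>n. U.hdist z (s n)) \<longlonglongrightarrow> 0"
    using U.hdist_nonneg[OF zU s] zU by auto
qed

lemma weakU_eq: "weakU = U.weak_topology"
  by (simp add: weakU_def U.weak_topology_def)

lemma phi_eq: "phi u = ereal (innerU u u)"
  by (simp add: phi_def innerU_self)

lemma mult_le_of_abs_le:
  fixes a b c :: real
  assumes "\<bar>a\<bar> \<le> c"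
  shows "a * b \<le> c * \<bar>b\<bar>"
proof -
  have "a * b \<le> \<bar>a\<bar> * \<bar>b\<bar>" by (simp add: abs_mult[symmetric])
  also have "\<dots> \<le> c * \<bar>b\<bar>" using assms by (rule mult_right_mono) simp
  finally show ?thesis .
qed

lemma K2_eq_halfspaces:
  "K2 = {u \<in> U. \<forall>(g, c)\<in>(\<lambda>g. (g, integral\<^sup>L MT (\<lambda>t. 0.8 * \<bar>fst g t\<bar> + 0.4 * \<bar>snd g t\<bar>))) ` U.
      innerU u g \<le> c}"
proof (intro set_eqI iffI)
  fix u assume u: "u \<in> K2"
  then have uU: "u \<in> U" and bounds: "AE t in MT. \<bar>fst u t\<bar> \<le> 0.8 \<and> \<bar>snd u t\<bar> \<le> 0.4"
    by (simp_all add: K2_def)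
  have "innerU u g \<le> integral\<^sup>L MT (\<lambda>t. 0.8 * \<bar>fst g t\<bar> + 0.4 * \<bar>snd g t\<bar>)" if g: "g \<in> U" for g
    unfolding innerU_def
  proof (rule integral_mono_AE)
    show "integrable MT (\<lambda>t. fst u t * fst g t + snd u t * snd g t)"
      by (rule integrable_innerU[OF uU g])
    show "integrable MT (\<lambda>t. 0.8 * \<bar>fst g t\<bar> + 0.4 * \<bar>snd g t\<bar>)"
      using g MT.integrable_of_square_integrable
      by (intro Bochner_Integration.integrable_add integrable_mult_right integrable_abs) (auto simp: mem_U_iff)
    show "AE t in MT. fst u t * fst g t + snd u t * snd g t \<le> 0.8 * \<bar>fst g t\<bar> + 0.4 * \<bar>snd g t\<bar>"
      using bounds
    proof eventually_elim
      case (elim t)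
      then have "fst u t * fst g t \<le> 0.8 * \<bar>fst g t\<bar>" "snd u t * snd g t \<le> 0.4 * \<bar>snd g t\<bar>"
        using mult_le_of_abs_le by blast+
      then show ?case by linarith
    qed
  qed
  then show "u \<in> {u \<in> U. \<forall>(g, c)\<in>(\<lambda>g. (g, integral\<^sup>L MT (\<lambda>t. 0.8 * \<bar>fst g t\<bar> + 0.4 * \<bar>snd g t\<bar>))) ` U.
      innerU u g \<le> c}"
    using uU by auto
next
  fix u assume "u \<in> {u \<in> U. \<forall>(g, c)\<in>(\<lambda>g. (g, integral\<^sup>L MT (\<lambda>t. 0.8 * \<bar>fst g t\<bar> + 0.4 * \<bar>snd g t\<bar>))) ` U.
      innerU u g \<le> c}"
  then have uU: "u \<in> U"
    and le: "\<And>g. g \<in> U \<Longrightarrow> innerU u g \<le> integral\<^sup>L MT (\<lambda>t. 0.8 * \<bar>fst g t\<bar> + 0.4 * \<bar>snd g t\<bar>)"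
    by auto
  have zero: "square_integrable MT (\<lambda>t. 0)" by (simp add: square_integrable_def)
  have "AE t in MT. \<bar>fst u t\<bar> \<le> 0.8"
  proof (rule MT.AE_abs_le_of_pairing_le)
    fix w assume "square_integrable MT w"
    then have "(w, \<lambda>t. 0) \<in> U" using zero by (simp add: mem_U_iff)
    from le[OF this] show "integral\<^sup>L MT (\<lambda>t. fst u t * w t) \<le> integral\<^sup>L MT (\<lambda>t. 0.8 * \<bar>w t\<bar>)"
      by (simp add: innerU_def)
  qed (use uU in \<open>simp_all add: mem_U_iff\<close>)
  moreover have "AE t in MT. \<bar>snd u t\<bar> \<le> 0.4"
  proof (rule MT.AE_abs_le_of_pairing_le)
    fix w assume "square_integrable MT w"
    then have "(\<lambda>t. 0, w) \<in> U" using zero by (simp add: mem_U_iff)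
    from le[OF this] show "integral\<^sup>L MT (\<lambda>t. snd u t * w t) \<le> integral\<^sup>L MT (\<lambda>t. 0.4 * \<bar>w t\<bar>)"
      by (simp add: innerU_def)
  qed (use uU in \<open>simp_all add: mem_U_iff\<close>)
  ultimately show "u \<in> K2" using uU by (simp add: K2_def AE_conj_iff)
qed

lemma closedin_weakU_K2: "closedin weakU K2"
  unfolding weakU_eq K2_eq_halfspaces by (rule U.closedin_weak_halfspaces) auto

definition integral_upto :: "(real \<Rightarrow> real) \<Rightarrow> real \<Rightarrow> real" where
  "integral_upto f r = integral\<^sup>L (lebesgue_on {0..r}) f"

lemma integral_upto_eq_indicator:
  fixes f :: "real \<Rightarrow> real"
  assumes "r \<le> b"
  shows "integral_upto f r = integral\<^sup>L (lebesgue_on {0..b}) (\<lambda>t. indicator {0..r} t * f t)"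
proof -
  have "lebesgue_on {0..r} = restrict_space (lebesgue_on {0..b}) {0..r}"
    using assms by (simp add: restrict_restrict_space Int_absorb1)
  then have "integral_upto f r = integral\<^sup>L (restrict_space (lebesgue_on {0..b}) {0..r}) f"
    by (simp add: integral_upto_def)
  also have "\<dots> = integral\<^sup>L (lebesgue_on {0..b}) (\<lambda>t. indicator {0..r} t *\<^sub>R f t)"
    using assms by (intro integral_restrict_space) (auto simp: sets_restrict_space_iff)
  finally show ?thesis by simp
qed

lemma abs_integral_indicator_le:
  fixes f :: "real \<Rightarrow> real"
  assumes f: "f \<in> borel_measurable (lebesgue_on {0..b})"
    and bound: "AE t in lebesgue_on {0..b}. \<bar>f t\<bar> \<le> C"
    and S: "S \<subseteq> {0..b}" "S \<in> sets lebesgue"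
  shows "\<bar>integral\<^sup>L (lebesgue_on {0..b}) (\<lambda>t. indicator S t * f t)\<bar> \<le> C * measure lebesgue S"
proof -
  interpret finite_measure "lebesgue_on {0..b}" by (rule finite_measure_lebesgue_on) auto
  have S_sets: "S \<in> sets (lebesgue_on {0..b})" using S by (simp add: sets_restrict_space_iff)
  have int: "integrable (lebesgue_on {0..b}) (\<lambda>t. indicator S t * f t)"
    using f S_sets bound by (intro integrable_const_bound[where B = "\<bar>C\<bar>"]) (auto simp: indicator_def)
  have "\<bar>integral\<^sup>L (lebesgue_on {0..b}) (\<lambda>t. indicator S t * f t)\<bar>
      \<le> integral\<^sup>L (lebesgue_on {0..b}) (\<lambda>t. \<bar>indicator S t * f t\<bar>)"
    using integral_norm_bound[of "lebesgue_on {0..b}" "\<lambda>t. indicator S t * f t"] by simp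
  also have "\<dots> \<le> integral\<^sup>L (lebesgue_on {0..b}) (\<lambda>t. C * indicator S t)"
  proof (rule integral_mono_AE)
    show "integrable (lebesgue_on {0..b}) (\<lambda>t. \<bar>indicator S t * f t\<bar>)"
      using int by (rule integrable_abs)
    show "integrable (lebesgue_on {0..b}) (\<lambda>t. C * indicator S t)"
      using S_sets by (intro integrable_const_bound[where B = "\<bar>C\<bar>"]) (auto simp: indicator_def)
    show "AE t in lebesgue_on {0..b}. \<bar>indicator S t * f t\<bar> \<le> C * indicator S t"
      using bound by eventually_elim (auto simp: indicator_def)
  qed
  also have "\<dots> = C * measure lebesgue S"
    using S Int_absorb2[OF S(1)] by (simp add: measure_restrict_space)
  finally show ?thesis .
qed

definition bounded_measurable :: "real \<Rightarrow> real \<Rightarrow> (real \<Rightarrow> real) \<Rightarrow> bool" where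
  "bounded_measurable b C f \<longleftrightarrow>
     f \<in> borel_measurable (lebesgue_on {0..b}) \<and> (AE t in lebesgue_on {0..b}. \<bar>f t\<bar> \<le> C)"

lemma integrable_of_bounded_measurable:
  assumes "bounded_measurable b C f"
  shows "integrable (lebesgue_on {0..b}) f"
proof -
  interpret finite_measure "lebesgue_on {0..b}" by (rule finite_measure_lebesgue_on) auto
  show ?thesis
    using assms by (intro integrable_const_bound[where B = C]) (auto simp: bounded_measurable_def)
qed

lemma integral_upto_diff:
  fixes f g :: "real \<Rightarrow> real"
  assumes "integrable (lebesgue_on {0..b}) f" "integrable (lebesgue_on {0..b}) g" "r \<le> b"
  shows "integral_upto f r - integral_upto g r = integral_upto (\<lambda>t. f t - g t) r"
proof -
  have "{0..r} \<in> sets (lebesgue_on {0..b})"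
    using assms(3) by (auto simp: sets_restrict_space_iff)
  then have "integrable (lebesgue_on {0..b}) (\<lambda>t. indicator {0..r} t * h t)"
    if "integrable (lebesgue_on {0..b}) h" for h :: "real \<Rightarrow> real"
    using integrable_real_mult_indicator[OF _ that] by (simp add: mult.commute)
  then show ?thesis
    using assms by (simp add: integral_upto_eq_indicator[OF assms(3)] right_diff_distrib)
qed

lemma abs_integral_upto_diff_le:
  assumes f: "bounded_measurable b C f" and xy: "0 \<le> x" "x \<le> y" "y \<le> b"
  shows "\<bar>integral_upto f y - integral_upto f x\<bar> \<le> C * (y - x)"
proof -
  have int: "integrable (lebesgue_on {0..b}) (\<lambda>t. indicator {0..r} t * f t)" if "r \<le> b" for r
    using integrable_real_mult_indicator[OF _ integrable_of_bounded_measurable[OF f], of "{0..r}"] that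
    by (simp add: sets_restrict_space_iff mult.commute)
  have "integral_upto f y - integral_upto f x
      = integral\<^sup>L (lebesgue_on {0..b}) (\<lambda>t. indicator {0..y} t * f t)
        - integral\<^sup>L (lebesgue_on {0..b}) (\<lambda>t. indicator {0..x} t * f t)"
    using xy integral_upto_eq_indicator[of y b f] integral_upto_eq_indicator[of x b f] by simp
  also have "\<dots> = integral\<^sup>L (lebesgue_on {0..b}) (\<lambda>t. indicator {0..y} t * f t - indicator {0..x} t * f t)"
    using xy by (intro Bochner_Integration.integral_diff[symmetric] int) auto
  also have "\<dots> = integral\<^sup>L (lebesgue_on {0..b}) (\<lambda>t. indicator {x<..y} t * f t)"
    using xy by (intro Bochner_Integration.integral_cong) (auto simp: indicator_def)
  finally have "\<bar>integral_upto f y - integral_upto f x\<bar>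
      = \<bar>integral\<^sup>L (lebesgue_on {0..b}) (\<lambda>t. indicator {x<..y} t * f t)\<bar>" by simp
  also have "\<dots> \<le> C * measure lebesgue {x<..y}"
    using f xy by (intro abs_integral_indicator_le) (auto simp: bounded_measurable_def)
  also have "\<dots> = C * (y - x)" using xy by simp
  finally show ?thesis .
qed

lemma abs_integral_upto_le:
  assumes "bounded_measurable b C f" "0 \<le> r" "r \<le> b"
  shows "\<bar>integral_upto f r\<bar> \<le> C * r"
proof -
  have "\<bar>integral_upto f r\<bar> = \<bar>integral\<^sup>L (lebesgue_on {0..b}) (\<lambda>t. indicator {0..r} t * f t)\<bar>"
    using assms by (simp add: integral_upto_eq_indicator)
  also have "\<dots> \<le> C * measure lebesgue {0..r}"
    using assms by (intro abs_integral_indicator_le) (auto simp: bounded_measurable_def)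
  finally show ?thesis using assms by simp
qed

lemma lipschitz_integral_upto:
  assumes "bounded_measurable b C f" "0 \<le> C"
  shows "C-lipschitz_on {0..b} (integral_upto f)"
  using abs_integral_upto_diff_le[OF assms(1)] assms(2)
  by (intro lipschitz_on_leI) (auto simp: dist_real_def abs_minus_commute)

lemma bounded_measurable_integral_upto:
  assumes "bounded_measurable b C f" "0 \<le> C"
  shows "bounded_measurable b (C * b) (integral_upto f)"
proof -
  have "continuous_on {0..b} (integral_upto f)"
    by (rule lipschitz_on_continuous_on[OF lipschitz_integral_upto[OF assms]])
  then have "integral_upto f \<in> borel_measurable (lebesgue_on {0..b})"
    by (rule continuous_imp_measurable_on_sets_lebesgue) auto
  moreover have "\<bar>integral_upto f r\<bar> \<le> C * b" if "r \<in> {0..b}" for r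
    using abs_integral_upto_le[OF assms(1)] mult_left_mono[OF _ assms(2), of r b] that by fastforce
  ultimately show ?thesis by (auto simp: bounded_measurable_def)
qed

lemma uniform_limit_of_equi_lipschitz:
  fixes f :: "'a \<Rightarrow> 'b::metric_space \<Rightarrow> 'c::metric_space"
  assumes S: "compact S"
    and lip: "\<forall>\<^sub>F x in F. L-lipschitz_on S (f x)" and lip_l: "L-lipschitz_on S l"
    and pointwise: "\<And>y. y \<in> S \<Longrightarrow> ((\<lambda>x. f x y) \<longlongrightarrow> l y) F"
  shows "uniform_limit S f l F"
proof (rule uniform_limitI)
  fix e :: real assume "0 < e"
  have L: "0 \<le> L" using lip_l by (rule lipschitz_on_nonneg)
  define \<delta> where "\<delta> = e / (3 * (L + 1))"
  have "L / (L + 1) < 1" using L by (simp add: divide_less_eq not_less)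
  then have "e / 3 * (L / (L + 1)) < e / 3 * 1"
    using \<open>0 < e\<close> by (intro mult_strict_left_mono) auto
  then have \<delta>: "0 < \<delta>" "L * \<delta> < e / 3"
    using \<open>0 < e\<close> L by (simp_all add: \<delta>_def mult_ac)
  have "\<exists>K. finite K \<and> K \<subseteq> S \<and> S \<subseteq> (\<Union>p\<in>K. ball p \<delta>)"
    using seq_compact_imp_totally_bounded[OF compact_imp_seq_compact[OF S]] \<delta>(1) by simp
  then obtain K where K: "finite K" "K \<subseteq> S" "S \<subseteq> (\<Union>p\<in>K. ball p \<delta>)"
    by (elim exE conjE)
  have "\<forall>p\<in>K. \<forall>\<^sub>F x in F. dist (f x p) (l p) < e / 3"
  proof
    fix p assume "p \<in> K"
    then have "((\<lambda>x. f x p) \<longlongrightarrow> l p) F" using K(2) pointwise by blast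
    then show "\<forall>\<^sub>F x in F. dist (f x p) (l p) < e / 3" using \<open>0 < e\<close> by (intro tendstoD) auto
  qed
  then have "\<forall>\<^sub>F x in F. \<forall>p\<in>K. dist (f x p) (l p) < e / 3"
    by (rule eventually_ball_finite[OF K(1)])
  with lip show "\<forall>\<^sub>F x in F. \<forall>y\<in>S. dist (f x y) (l y) < e"
  proof eventually_elim
    case (elim x)
    show ?case
    proof
      fix y assume "y \<in> S"
      then obtain p where p: "p \<in> K" "dist p y < \<delta>" using K(3) by auto
      have "dist (f x y) (l y) \<le> dist (f x y) (f x p) + dist (f x p) (l p) + dist (l p) (l y)"
        using dist_triangle[of "f x y" "l y" "f x p"] dist_triangle[of "f x p" "l y" "l p"] by linarith
      also have "\<dots> < L * \<delta> + e / 3 + L * \<delta>"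
      proof -
        have "L * dist p y \<le> L * \<delta>" using p L by (intro mult_left_mono) auto
        moreover have "dist (f x y) (f x p) \<le> L * dist p y"
          using lipschitz_onD[OF elim(1) \<open>y \<in> S\<close>] p K(2) by (auto simp: dist_commute)
        moreover have "dist (l p) (l y) \<le> L * dist p y"
          using lipschitz_onD[OF lip_l] p K(2) \<open>y \<in> S\<close> by blast
        moreover have "dist (f x p) (l p) < e / 3" using elim(2) p(1) by blast
        ultimately show ?thesis by linarith
      qed
      also have "\<dots> < e" using \<delta> by linarith
      finally show "dist (f x y) (l y) < e" .
    qed
  qed
qed

lemma uniform_limit_integral_upto:
  assumes lim: "uniform_limit {0..b} f l F"
    and bounded: "\<forall>\<^sub>F x in F. bounded_measurable b C (f x)" and bounded_l: "bounded_measurable b C l"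
  shows "uniform_limit {0..b} (\<lambda>x. integral_upto (f x)) (integral_upto l) F"
proof (rule uniform_limitI)
  fix e :: real assume "0 < e"
  define \<eta> where "\<eta> = e / (\<bar>b\<bar> + 1)"
  have \<eta>: "0 < \<eta>" "\<eta> * \<bar>b\<bar> < e" using \<open>0 < e\<close> by (auto simp: \<eta>_def field_simps)
  have "\<forall>\<^sub>F x in F. \<forall>t\<in>{0..b}. dist (f x t) (l t) < \<eta>"
    using lim \<eta>(1) by (rule uniform_limitD)
  with bounded show "\<forall>\<^sub>F x in F. \<forall>r\<in>{0..b}. dist (integral_upto (f x) r) (integral_upto l r) < e"
  proof eventually_elim
    case (elim x)
    have diff: "bounded_measurable b \<eta> (\<lambda>t. f x t - l t)"
      using elim bounded_l by (auto simp: bounded_measurable_def dist_real_def intro!: AE_I2 less_imp_le)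
    show ?case
    proof
      fix r assume r: "r \<in> {0..b}"
      have "dist (integral_upto (f x) r) (integral_upto l r) = \<bar>integral_upto (\<lambda>t. f x t - l t) r\<bar>"
        using integral_upto_diff[of b "f x" l r] elim(1) bounded_l r
        by (simp add: dist_real_def integrable_of_bounded_measurable)
      also have "\<dots> \<le> \<eta> * r" using abs_integral_upto_le[OF diff] r by auto
      also have "\<dots> \<le> \<eta> * \<bar>b\<bar>" using r \<eta>(1) by (intro mult_left_mono) auto
      finally show "dist (integral_upto (f x) r) (integral_upto l r) < e" using \<eta>(2) by linarith
    qed
  qed
qed

lemma lipschitz_sin: "1-lipschitz_on (UNIV :: real set) sin"
proof -
  have le: "dist (sin a) (sin b) \<le> 1 * dist a b" for a b :: real
  proof -
    have "\<bar>sin a - sin b\<bar> = 2 * \<bar>sin ((a - b) / 2)\<bar> * \<bar>cos ((a + b) / 2)\<bar>"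
      by (simp add: sin_diff_sin abs_mult)
    also have "\<dots> \<le> 2 * \<bar>(a - b) / 2\<bar> * 1"
      by (intro mult_mono abs_sin_x_le_abs_x) auto
    finally show ?thesis by (simp add: dist_real_def)
  qed
  show ?thesis by (rule lipschitz_onI) (use le in simp_all)
qed

lemma lipschitz_cos: "1-lipschitz_on (UNIV :: real set) cos"
proof -
  have le: "dist (cos a) (cos b) \<le> 1 * dist a b" for a b :: real
  proof -
    have "\<bar>cos a - cos b\<bar> = 2 * \<bar>sin ((a + b) / 2)\<bar> * \<bar>sin ((b - a) / 2)\<bar>"
      by (simp add: cos_diff_cos abs_mult)
    also have "\<dots> \<le> 2 * 1 * \<bar>(b - a) / 2\<bar>"
      by (intro mult_mono abs_sin_x_le_abs_x) auto
    finally show ?thesis by (simp add: dist_real_def abs_minus_commute)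
  qed
  show ?thesis by (rule lipschitz_onI) (use le in simp_all)
qed

lemma tendsto_vector6:
  fixes a1 a2 a3 a4 a5 a6 :: real
  assumes "(f1 \<longlongrightarrow> a1) F" "(f2 \<longlongrightarrow> a2) F" "(f3 \<longlongrightarrow> a3) F"
    "(f4 \<longlongrightarrow> a4) F" "(f5 \<longlongrightarrow> a5) F" "(f6 \<longlongrightarrow> a6) F"
  shows "((\<lambda>x. vector [f1 x, f2 x, f3 x, f4 x, f5 x, f6 x] :: real^6) \<longlongrightarrow> vector [a1, a2, a3, a4, a5, a6]) F"
proof (rule vec_tendstoI)
  fix i :: 6
  show "((\<lambda>x. (vector [f1 x, f2 x, f3 x, f4 x, f5 x, f6 x] :: real^6) $ i)
      \<longlongrightarrow> (vector [a1, a2, a3, a4, a5, a6] :: real^6) $ i) F"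
    unfolding vector_def using assms by (simp add: fun_upd_def)
qed

definition thrust :: "(real \<Rightarrow> real) \<times> (real \<Rightarrow> real) \<Rightarrow> real \<Rightarrow> real" where
  "thrust u s = fst u s + snd u s"

definition torque :: "(real \<Rightarrow> real) \<times> (real \<Rightarrow> real) \<Rightarrow> real \<Rightarrow> real" where
  "torque u s = fst u s - snd u s"

definition angular_velocity :: "(real \<Rightarrow> real) \<times> (real \<Rightarrow> real) \<Rightarrow> real \<Rightarrow> real" where
  "angular_velocity u = integral_upto (\<lambda>s. 0.2 * torque u s)"

definition velocity :: "(real \<Rightarrow> real) \<Rightarrow> (real \<Rightarrow> real) \<times> (real \<Rightarrow> real) \<Rightarrow> real \<Rightarrow> real" where
  "velocity trig u = integral_upto (\<lambda>s. thrust u s * trig (G3 u s))"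

lemma G3_eq: "G3 u t = pi / 2 + integral_upto (angular_velocity u) t"
  by (simp add: G3_def angular_velocity_def integral_upto_def[abs_def] torque_def)

lemma h_eq: "h u = vector [-10 + integral_upto (velocity cos u) T_end, -10 + integral_upto (velocity sin u) T_end,
    G3 u T_end, velocity cos u T_end, velocity sin u T_end, angular_velocity u T_end]"
  by (simp add: h_def velocity_def angular_velocity_def integral_upto_def[abs_def] thrust_def torque_def)

lemma T_end_pos: "0 < T_end"
  by (simp add: T_end_def)

lemma bounded_measurable_controls:
  assumes "u \<in> K2"
  shows "bounded_measurable T_end 1.2 (thrust u)" "bounded_measurable T_end 0.24 (\<lambda>s. 0.2 * torque u s)"
proof -
  have meas: "fst u \<in> borel_measurable MT" "snd u \<in> borel_measurable MT"
    using assms by (auto simp: K2_def mem_U_iff square_integrable_def)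
  have AE: "AE t in MT. \<bar>fst u t\<bar> \<le> 0.8 \<and> \<bar>snd u t\<bar> \<le> 0.4"
    using assms by (simp add: K2_def)
  have "AE t in MT. \<bar>thrust u t\<bar> \<le> 1.2"
    using AE
  proof eventually_elim
    case (elim t)
    then show ?case using abs_triangle_ineq[of "fst u t" "snd u t"] unfolding thrust_def by linarith
  qed
  then show "bounded_measurable T_end 1.2 (thrust u)"
    using meas by (simp add: bounded_measurable_def thrust_def[abs_def] borel_measurable_add)
  have "AE t in MT. \<bar>0.2 * torque u t\<bar> \<le> 0.24"
    using AE
  proof eventually_elim
    case (elim t)
    then have "\<bar>torque u t\<bar> \<le> 1.2"
      using abs_triangle_ineq4[of "fst u t" "snd u t"] unfolding torque_def by linarith
    then show ?case by (simp add: abs_mult)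
  qed
  then show "bounded_measurable T_end 0.24 (\<lambda>s. 0.2 * torque u s)"
    using meas by (simp add: bounded_measurable_def torque_def borel_measurable_diff)
qed

lemma bounded_measurable_angular_velocity:
  "u \<in> K2 \<Longrightarrow> bounded_measurable T_end (0.24 * T_end) (angular_velocity u)"
  unfolding angular_velocity_def
  by (rule bounded_measurable_integral_upto[OF bounded_measurable_controls(2)]) auto

lemma lipschitz_angular_velocity:
  "u \<in> K2 \<Longrightarrow> 0.24-lipschitz_on {0..T_end} (angular_velocity u)"
  unfolding angular_velocity_def
  by (rule lipschitz_integral_upto[OF bounded_measurable_controls(2)]) auto

lemma continuous_on_G3:
  assumes "u \<in> K2"
  shows "continuous_on {0..T_end} (G3 u)"
proof -
  have "continuous_on {0..T_end} (integral_upto (angular_velocity u))"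
    using bounded_measurable_angular_velocity[OF assms] T_end_pos
    by (intro lipschitz_on_continuous_on[OF lipschitz_integral_upto]) auto
  then show ?thesis by (simp add: G3_eq[abs_def] continuous_on_add)
qed

lemma measurable_trig_G3:
  assumes "u \<in> K2" "continuous_on UNIV trig"
  shows "(\<lambda>s. trig (G3 u s)) \<in> borel_measurable MT"
proof -
  have "continuous_on {0..T_end} (\<lambda>s. trig (G3 u s))"
    by (rule continuous_on_compose2[OF assms(2) continuous_on_G3[OF assms(1)]]) auto
  then show ?thesis by (rule continuous_imp_measurable_on_sets_lebesgue) auto
qed

lemma bounded_measurable_thrust_trig:
  assumes "u \<in> K2" "v \<in> K2" and trig: "continuous_on UNIV trig" "\<And>x. \<bar>trig x\<bar> \<le> 1"
  shows "bounded_measurable T_end 1.2 (\<lambda>s. thrust u s * trig (G3 v s))"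
proof -
  have "\<bar>thrust u s * trig (G3 v s)\<bar> \<le> 1.2" if "\<bar>thrust u s\<bar> \<le> 1.2" for s
    using mult_mono[OF that trig(2)[of "G3 v s"]] by (simp add: abs_mult)
  then show ?thesis
    using bounded_measurable_controls(1)[OF assms(1)] measurable_trig_G3[OF assms(2) trig(1)]
    by (auto simp: bounded_measurable_def elim!: eventually_mono)
qed

lemma indicator_measurable_MT: "r \<le> T_end \<Longrightarrow> (indicator {0..r} :: real \<Rightarrow> real) \<in> borel_measurable MT"
  by (intro borel_measurable_indicator) (auto simp: sets_restrict_space_iff)

lemma test_function_U:
  assumes "f \<in> borel_measurable MT" "\<And>t. \<bar>f t\<bar> \<le> B" "g \<in> borel_measurable MT" "\<And>t. \<bar>g t\<bar> \<le> B"
  shows "(f, g) \<in> U"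
  using assms by (auto simp: mem_U_iff intro!: MT.square_integrable_of_bounded[where B = B])

lemma innerU_indicator:
  assumes "r \<le> T_end"
  shows "innerU u (\<lambda>s. indicator {0..r} s * a s, \<lambda>s. indicator {0..r} s * b s)
    = integral_upto (\<lambda>s. fst u s * a s + snd u s * b s) r"
  using assms by (simp add: innerU_def integral_upto_eq_indicator[OF assms] algebra_simps)

context
  fixes u0 assumes u0: "u0 \<in> K2"
begin

lemma u0_in_weak_K2: "u0 \<in> topspace (subtopology weakU K2)"
  using u0 by (auto simp: weakU_eq K2_def)

lemma eventually_weak_K2: "\<forall>\<^sub>F u in atin (subtopology weakU K2) u0. u \<in> K2"
  unfolding eventually_atin
proof (intro disjI2 exI conjI)
  show "openin (subtopology weakU K2) (topspace (subtopology weakU K2))" by (rule openin_topspace)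
qed (use u0_in_weak_K2 in auto)

lemma tendsto_weak_innerU:
  assumes "g \<in> U"
  shows "((\<lambda>u. innerU u g) \<longlongrightarrow> innerU u0 g) (atin (subtopology weakU K2) u0)"
proof -
  have "continuous_map (subtopology weakU K2) euclideanreal (\<lambda>u. innerU u g)"
    unfolding weakU_eq using U.continuous_map_weak_ip[OF assms] by (rule continuous_map_from_subtopology)
  then show ?thesis using u0_in_weak_K2 by (auto simp: continuous_map_atin)
qed

lemma uniform_limit_angular_velocity:
  "uniform_limit {0..T_end} angular_velocity (angular_velocity u0) (atin (subtopology weakU K2) u0)"
proof (rule uniform_limit_of_equi_lipschitz)
  show "\<forall>\<^sub>F u in atin (subtopology weakU K2) u0. 0.24-lipschitz_on {0..T_end} (angular_velocity u)"
    using eventually_weak_K2 by eventually_elim (rule lipschitz_angular_velocity)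
  show "0.24-lipschitz_on {0..T_end} (angular_velocity u0)"
    using u0 by (rule lipschitz_angular_velocity)
  fix r assume r: "r \<in> {0..T_end}"
  define g :: "(real \<Rightarrow> real) \<times> (real \<Rightarrow> real)"
    where "g = (\<lambda>s. indicator {0..r} s * 0.2, \<lambda>s. indicator {0..r} s * (- 0.2))"
  have m: "(\<lambda>s. indicator {0..r} s * c) \<in> borel_measurable MT" for c :: real
    using indicator_measurable_MT[of r] r by (intro borel_measurable_times) auto
  have "g \<in> U"
    unfolding g_def by (rule test_function_U[OF m _ m, where B = 1]) (auto simp: indicator_def)
  moreover have "innerU u g = angular_velocity u r" for u
    using innerU_indicator[of r u "\<lambda>_. 0.2" "\<lambda>_. - 0.2"] r
    by (simp add: g_def angular_velocity_def torque_def algebra_simps)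
  ultimately show "((\<lambda>u. angular_velocity u r) \<longlongrightarrow> angular_velocity u0 r) (atin (subtopology weakU K2) u0)"
    using tendsto_weak_innerU[of g] by simp
qed simp

lemma uniform_limit_G3:
  "uniform_limit {0..T_end} G3 (G3 u0) (atin (subtopology weakU K2) u0)"
proof -
  have "uniform_limit {0..T_end} (\<lambda>u. integral_upto (angular_velocity u)) (integral_upto (angular_velocity u0))
      (atin (subtopology weakU K2) u0)"
  proof (rule uniform_limit_integral_upto[OF uniform_limit_angular_velocity _ bounded_measurable_angular_velocity[OF u0]])
    show "\<forall>\<^sub>F u in atin (subtopology weakU K2) u0. bounded_measurable T_end (0.24 * T_end) (angular_velocity u)"
      using eventually_weak_K2 by eventually_elim (rule bounded_measurable_angular_velocity)
  qed
  then show ?thesis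
    unfolding G3_eq[abs_def] by (intro uniform_limit_intros)
qed

end

context
  fixes u0 assumes u0: "u0 \<in> K2"
begin

lemma tendsto_velocity:
  assumes trig: "1-lipschitz_on UNIV trig" "\<And>x. \<bar>trig x\<bar> \<le> 1" and r: "r \<in> {0..T_end}"
  shows "((\<lambda>u. velocity trig u r) \<longlongrightarrow> velocity trig u0 r) (atin (subtopology weakU K2) u0)"
proof -
  have trig_cont: "continuous_on UNIV trig" using trig(1) by (rule lipschitz_on_continuous_on)
  define g :: "(real \<Rightarrow> real) \<times> (real \<Rightarrow> real)"
    where "g = (\<lambda>s. indicator {0..r} s * trig (G3 u0 s), \<lambda>s. indicator {0..r} s * trig (G3 u0 s))"
  have m: "(\<lambda>s. indicator {0..r} s * trig (G3 u0 s)) \<in> borel_measurable MT"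
    using indicator_measurable_MT[of r] measurable_trig_G3[OF u0 trig_cont] r
    by (intro borel_measurable_times) auto
  have "g \<in> U"
    unfolding g_def by (rule test_function_U[OF m _ m, where B = 1]) (auto simp: indicator_def abs_mult trig(2))
  then have lim_g: "((\<lambda>u. innerU u g) \<longlongrightarrow> innerU u0 g) (atin (subtopology weakU K2) u0)"
    by (rule tendsto_weak_innerU[OF u0])
  have inner_g: "innerU u g = integral_upto (\<lambda>s. thrust u s * trig (G3 u0 s)) r" for u
    using innerU_indicator[of r u] r by (simp add: g_def thrust_def algebra_simps)
  define err where "err u = integral_upto (\<lambda>s. thrust u s * (trig (G3 u s) - trig (G3 u0 s))) r" for u
  have split: "\<forall>\<^sub>F u in atin (subtopology weakU K2) u0. innerU u g + err u = velocity trig u r"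
    using eventually_weak_K2[OF u0]
  proof eventually_elim
    case (elim u)
    have "velocity trig u r - innerU u g = err u"
      using integral_upto_diff[OF integrable_of_bounded_measurable integrable_of_bounded_measurable, of T_end]
        bounded_measurable_thrust_trig[OF elim elim trig_cont trig(2)]
        bounded_measurable_thrust_trig[OF elim u0 trig_cont trig(2)] r
      by (simp add: velocity_def inner_g err_def right_diff_distrib)
    then show ?case by simp
  qed
  have err_lim: "(err \<longlongrightarrow> 0) (atin (subtopology weakU K2) u0)"
  proof (rule tendstoI)
    fix e :: real assume "0 < e"
    define \<eta> where "\<eta> = e / (1.2 * T_end + 1)"
    have \<eta>: "0 < \<eta>" "1.2 * \<eta> * T_end < e"
      using \<open>0 < e\<close> T_end_pos by (auto simp: \<eta>_def field_simps)
    have "\<forall>\<^sub>F u in atin (subtopology weakU K2) u0. \<forall>s\<in>{0..T_end}. dist (G3 u s) (G3 u0 s) < \<eta>"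
      using uniform_limit_G3[OF u0] \<eta>(1) by (rule uniform_limitD)
    with eventually_weak_K2[OF u0]
    show "\<forall>\<^sub>F u in atin (subtopology weakU K2) u0. dist (err u) 0 < e"
    proof eventually_elim
      case (elim u)
      have pointwise: "\<bar>thrust u s * (trig (G3 u s) - trig (G3 u0 s))\<bar> \<le> 1.2 * \<eta>"
        if "\<bar>thrust u s\<bar> \<le> 1.2" "s \<in> {0..T_end}" for s
      proof -
        have "\<bar>G3 u s - G3 u0 s\<bar> < \<eta>" using elim(2) that(2) by (simp add: dist_real_def)
        then have "\<bar>trig (G3 u s) - trig (G3 u0 s)\<bar> \<le> \<eta>"
          using lipschitz_onD[OF trig(1), of "G3 u s" "G3 u0 s"] by (simp add: dist_real_def)
        then show ?thesis using mult_mono[OF that(1)] \<eta>(1) by (simp add: abs_mult)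
      qed
      have "AE s in MT. \<bar>thrust u s\<bar> \<le> 1.2"
        using bounded_measurable_controls(1)[OF elim(1)] by (simp add: bounded_measurable_def)
      then have "AE s in MT. \<bar>thrust u s * (trig (G3 u s) - trig (G3 u0 s))\<bar> \<le> 1.2 * \<eta>"
        using AE_space[of MT] by eventually_elim (rule pointwise, auto)
      then have "bounded_measurable T_end (1.2 * \<eta>) (\<lambda>s. thrust u s * (trig (G3 u s) - trig (G3 u0 s)))"
        using bounded_measurable_controls(1)[OF elim(1)]
          measurable_trig_G3[OF elim(1) trig_cont] measurable_trig_G3[OF u0 trig_cont]
        by (simp add: bounded_measurable_def borel_measurable_times borel_measurable_diff)
      from abs_integral_upto_le[OF this] r have "\<bar>err u\<bar> \<le> 1.2 * \<eta> * r"
        by (simp add: err_def)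
      also have "\<dots> \<le> 1.2 * \<eta> * T_end" using r \<eta>(1) by (intro mult_left_mono) auto
      finally show ?case using \<eta>(2) by simp
    qed
  qed
  have "((\<lambda>u. innerU u g + err u) \<longlongrightarrow> innerU u0 g + 0) (atin (subtopology weakU K2) u0)"
    using lim_g err_lim by (rule tendsto_add)
  then have "((\<lambda>u. velocity trig u r) \<longlongrightarrow> innerU u0 g + 0) (atin (subtopology weakU K2) u0)"
    using split by (rule Lim_transform_eventually)
  then show ?thesis by (simp add: inner_g velocity_def)
qed

lemma uniform_limit_velocity:
  assumes trig: "1-lipschitz_on UNIV trig" "\<And>x. \<bar>trig x\<bar> \<le> 1"
  shows "uniform_limit {0..T_end} (velocity trig) (velocity trig u0) (atin (subtopology weakU K2) u0)"
proof (rule uniform_limit_of_equi_lipschitz)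
  have trig_cont: "continuous_on UNIV trig" using trig(1) by (rule lipschitz_on_continuous_on)
  have lip: "1.2-lipschitz_on {0..T_end} (velocity trig u)" if "u \<in> K2" for u
    unfolding velocity_def
    by (rule lipschitz_integral_upto[OF bounded_measurable_thrust_trig[OF that that trig_cont trig(2)]]) simp
  show "\<forall>\<^sub>F u in atin (subtopology weakU K2) u0. 1.2-lipschitz_on {0..T_end} (velocity trig u)"
    using eventually_weak_K2[OF u0] by eventually_elim (rule lip)
  show "1.2-lipschitz_on {0..T_end} (velocity trig u0)" using u0 by (rule lip)
qed (use tendsto_velocity[OF trig] in auto)

lemma tendsto_position:
  assumes trig: "1-lipschitz_on UNIV trig" "\<And>x. \<bar>trig x\<bar> \<le> 1"
  shows "((\<lambda>u. integral_upto (velocity trig u) T_end) \<longlongrightarrow> integral_upto (velocity trig u0) T_end)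
    (atin (subtopology weakU K2) u0)"
proof -
  have trig_cont: "continuous_on UNIV trig" using trig(1) by (rule lipschitz_on_continuous_on)
  have bounded: "bounded_measurable T_end (1.2 * T_end) (velocity trig u)" if "u \<in> K2" for u
    unfolding velocity_def
    by (rule bounded_measurable_integral_upto[OF bounded_measurable_thrust_trig[OF that that trig_cont trig(2)]]) simp
  have "uniform_limit {0..T_end} (\<lambda>u. integral_upto (velocity trig u)) (integral_upto (velocity trig u0))
      (atin (subtopology weakU K2) u0)"
  proof (rule uniform_limit_integral_upto[OF uniform_limit_velocity[OF trig] _ bounded[OF u0]])
    show "\<forall>\<^sub>F u in atin (subtopology weakU K2) u0. bounded_measurable T_end (1.2 * T_end) (velocity trig u)"
      using eventually_weak_K2[OF u0] by eventually_elim (rule bounded)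
  qed
  then show ?thesis using T_end_pos by (intro tendsto_uniform_limitI) auto
qed

lemma tendsto_h: "(h \<longlongrightarrow> h u0) (atin (subtopology weakU K2) u0)"
  unfolding h_eq[abs_def] h_eq
  using T_end_pos lipschitz_sin lipschitz_cos
  by (intro tendsto_vector6 tendsto_add tendsto_const tendsto_position tendsto_velocity
      tendsto_uniform_limitI[OF uniform_limit_G3[OF u0]]
      tendsto_uniform_limitI[OF uniform_limit_angular_velocity[OF u0]]) auto

end

lemma continuous_map_h: "continuous_map (subtopology weakU K2) euclidean h"
  unfolding continuous_map_atin
proof
  fix u0 assume "u0 \<in> topspace (subtopology weakU K2)"
  then have "u0 \<in> K2" by simp
  then show "limitin euclidean h (h u0) (atin (subtopology weakU K2) u0)"
    by (simp add: tendsto_h)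
qed

lemma phi_sublevel_eq: "{u \<in> U. phi u \<le> ereal \<alpha>} = {u \<in> U. innerU u u \<le> \<alpha>}"
  by (simp add: phi_eq)

lemma closedin_phi_sublevel: "closedin weakU {u \<in> U. phi u \<le> ereal \<alpha>}"
  unfolding phi_sublevel_eq weakU_eq by (rule U.closedin_weak_ball)

lemma rel_compact_phi_sublevel: "rel_compact_in weakU {u \<in> U. phi u \<le> ereal \<alpha>}"
  unfolding rel_compact_in_def closure_of_closedin[OF closedin_phi_sublevel]
  unfolding phi_sublevel_eq weakU_eq by (rule U.compactin_weak_ball)

lemma K2_subset: "K2 \<subseteq> U"
  by (auto simp: K2_def)

lemma zero_in_K2: "(\<lambda>t. 0, \<lambda>t. 0) \<in> K2"
  by (simp add: K2_def mem_U_iff square_integrable_def)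

lemma f_param_le_iff: "f_param u z \<le> ereal \<alpha> \<longleftrightarrow> u \<in> K2 \<and> h u = z \<and> phi u \<le> ereal \<alpha>"
  by (auto simp: f_param_def indicatorF_def phi_eq)

lemma closedin_f_param_sublevel:
  "closedin (prod_topology weakU euclidean) {x \<in> topspace (prod_topology weakU euclidean). case_prod f_param x \<le> ereal \<alpha>}"
proof -
  define S where "S = K2 \<inter> {u \<in> U. phi u \<le> ereal \<alpha>}"
  have S: "closedin weakU S" "S \<subseteq> K2"
    using closedin_weakU_K2 closedin_phi_sublevel by (auto simp: S_def)
  have "continuous_map (subtopology weakU S) euclidean h"
    using continuous_map_from_subtopology_mono[OF continuous_map_h S(2)] .
  then have "closedin (prod_topology (subtopology weakU S) euclidean) ((\<lambda>u. (u, h u)) ` topspace (subtopology weakU S))"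
    by (rule continuous_map_imp_closed_graph) simp
  moreover have "closedin (prod_topology weakU euclidean) (S \<times> topspace euclidean)"
    using S(1) by (simp add: closedin_prod_Times_iff)
  ultimately have "closedin (prod_topology weakU euclidean) ((\<lambda>u. (u, h u)) ` topspace (subtopology weakU S))"
    unfolding prod_topology_subtopology(1) by (rule closedin_trans_full)
  moreover have "topspace (subtopology weakU S) = S"
    using closedin_subset[OF S(1)] by auto
  then have "(\<lambda>u. (u, h u)) ` topspace (subtopology weakU S)
      = {x \<in> topspace (prod_topology weakU euclidean). case_prod f_param x \<le> ereal \<alpha>}"
    using K2_subset by (auto simp: S_def f_param_le_iff weakU_eq)
  ultimately show ?thesis by simp
qed

theorem corollary6p3:
  shows "(proper_on U phi \<and> lsc_wrt weakU phi)
       \<and> (\<forall>\<alpha>::real. rel_compact_in weakU {u \<in> U. phi u \<le> ereal \<alpha>})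
       \<and> (proper_on (U \<times> UNIV) (case_prod f_param)
          \<and> lsc_wrt (prod_topology weakU euclidean) (case_prod f_param)
          \<and> weakly_level_compact f_param)"
proof (intro conjI allI)
  have zero: "(\<lambda>t. 0, \<lambda>t. 0) \<in> U" using zero_in_K2 K2_subset by blast
  show "proper_on U phi"
    using zero by (auto simp: proper_on_def phi_eq)
  show "lsc_wrt weakU phi"
    using closedin_phi_sublevel by (simp add: lsc_wrt_def weakU_eq)
  show "rel_compact_in weakU {u \<in> U. phi u \<le> ereal \<alpha>}" for \<alpha>
    by (rule rel_compact_phi_sublevel)
  show "proper_on (U \<times> UNIV) (case_prod f_param)"
  proof -
    have "f_param (\<lambda>t. 0, \<lambda>t. 0) (h (\<lambda>t. 0, \<lambda>t. 0)) = 0"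
      using zero_in_K2 by (simp add: f_param_def indicatorF_def phi_eq innerU_self)
    moreover have "f_param u z \<noteq> - \<infinity>" for u z
      by (simp add: f_param_def indicatorF_def phi_eq)
    ultimately show ?thesis
      unfolding proper_on_def using zero by (intro conjI ballI bexI[of _ "((\<lambda>t. 0, \<lambda>t. 0), h (\<lambda>t. 0, \<lambda>t. 0))"]) auto
  qed
  show "lsc_wrt (prod_topology weakU euclidean) (case_prod f_param)"
    unfolding lsc_wrt_def using closedin_f_param_sublevel by blast
  show "weakly_level_compact f_param"
    unfolding weakly_level_compact_def
  proof (intro allI exI conjI)
    fix \<alpha> :: real
    show "rel_compact_in weakU {u \<in> U. phi u \<le> ereal \<alpha>}" by (rule rel_compact_phi_sublevel)
    show "\<forall>z\<in>UNIV. {u \<in> U. f_param u z \<le> ereal \<alpha>} \<subseteq> {u \<in> U. phi u \<le> ereal \<alpha>}"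
      by (auto simp: f_param_le_iff)
  qed auto
qed

end
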